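(* Let $0<\phi<\pi/6$. For every $p\in\mathcal S_\phi$ and $t\in[0,T]$, the inverse Laplace transforms $B_{j,k}=\mathcal L^{-1}b_{j,k}$ and $R=\mathcal L^{-1}r$ satisfy $$|B_{j,k}(p,t)|<\frac{C_1(\phi,\alpha_j)}{\Gamma(\alpha_j+k\beta)}A_b(T)|p|^{k\beta+\alpha_j-1}e^{2\rho_0|p|},\qquad |R(p,t)|<\frac{C_2(\phi)}{\Gamma(\alpha_r)}A_r(T)|p|^{\alpha_r-1}e^{2\rho_0|p|},$$ where $C_1$ depends only on $\phi,\alpha_j$ and $C_2$ only on $\phi$.
   Context: Let $\rho_0>0$, $T>0$, $\mathcal D_{\rho_0}=\{(y,t):\arg y\in(-2\pi/3,2\pi/3),|y|>\rho_0,0\le t\le T\}$. $r(y,t)$ is analytic in $y$ on $\mathcal D_{\rho_0}$ with $|y^{\alpha_r}r(y,t)|<A_r(T)$, $\alpha_r\ge1$. For $j=0,\dots,3$, $k\ge0$, $b_{j,k}(y,t)$ is analytic in $y$ on $\mathcal D_{\rho_0}$ with $|y^{\alpha_j+k\beta}b_{j,k}(y,t)|<A_b(T)$, where $\beta,\alpha_j>0$ and $A_b(T)$ is independent of $j,k$. $\mathcal S_\phi=\{p:\arg p\in(-\phi,\phi),0<|p|<\infty\}$. Inverse Laplace transform: $\mathcal L^{-1}g(p,t)=\frac1{2\pi i}\int_{\mathcal C}e^{py}g(y,t)\,dy$ with $\mathcal C=\{c+ire^{i\phi'\,\mathrm{sgn}(r)}:r\in\mathbb R\}$, $c$ large, $\phi<\phi'<\pi/6$,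 traversed with $r$ increasing. *)

theory Defs
  imports "HOL-Complex_Analysis.Complex_Analysis"
begin

text \<open>The y-domain of D_rho0 (for fixed t): arg y in (-2pi/3, 2pi/3), |y| > rho0.\<close>
definition sector_dom :: "real \<Rightarrow> complex set" where
  "sector_dom \<rho>0 = {y. cmod y > \<rho>0 \<and> \<bar>Arg y\<bar> < 2 * pi / 3}"

definition S_sector :: "real \<Rightarrow> complex set" where
  "S_sector \<phi> = {p. p \<noteq> 0 \<and> \<bar>Arg p\<bar> < \<phi>}"

definition ilt_path :: "real \<Rightarrow> real \<Rightarrow> real \<Rightarrow> complex" where
  "ilt_path \<phi>' c r = of_real c + \<i> * of_real r * exp (\<i> * of_real (\<phi>' * sgn r))"

definition ilt_path_deriv :: "real \<Rightarrow> real \<Rightarrow> complex" where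
  "ilt_path_deriv \<phi>' r = \<i> * exp (\<i> * of_real (\<phi>' * sgn r))"

definition ILT :: "real \<Rightarrow> real \<Rightarrow> (complex \<Rightarrow> complex) \<Rightarrow> complex \<Rightarrow> complex" where
  "ILT \<phi>' c g p = (1 / (2 * of_real pi * \<i>)) *
     integral (UNIV :: real set)
       (\<lambda>r. exp (p * ilt_path \<phi>' c r) * g (ilt_path \<phi>' c r) * ilt_path_deriv \<phi>' r)"

end

theory Submission
  imports Defs "HOL-Real_Asymp.Real_Asymp"
begin

(* Write p = |p| e^(i theta) with |theta| < phi. Each of the two rays from c forming the contour C lies
   in one of the half-planes Re (y e^(-+ i pi/6)) > rho0, which are convex and contained in D_rho0.
   There e^(p y) g(y) has a primitive and decays exponentially along every direction w with
   Re (p w) < 0, so each ray can be swung onto a ray issuing from the common vertex R e^(-i theta);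
   the connecting segments are the same for both rays and cancel. Along the new rays
   Re (p y) = |p| (R - r sin tau) while |y|^2 = R^2 - 2 R r sin tau + r^2 with sin tau < 1/2, so with
   |g y| <= A |y|^(-nu) each contributes at most A e^(|p| R) R^(1-nu) times a constant. Choosing
   R = nu / |p| + lambda rho0 gives A |p|^(nu-1) e^(2 rho0 |p|) e^nu nu^(-nu) (nu + L) (...), and by a
   Stirling-type bound Gamma(nu) times this factor is at most const(phi) (1 + nu^(-3)), which decreases
   in nu; for nu = alpha_j + k beta this yields C1(alpha_j), and alpha_r >= 1 yields C2. *)

section \<open>Integrals along rays\<close>

definition ray_integral :: "complex \<Rightarrow> (complex \<Rightarrow> complex) \<Rightarrow> complex \<Rightarrow> complex \<Rightarrow> complex" where
  "ray_integral p g a w = integral {0..} (\<lambda>r. exp (p * (a + of_real r * w)) * g (a + of_real r * w) * w)"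

lemma has_integral_primitive_on_segment:
  fixes F f :: "complex \<Rightarrow> complex"
  assumes F: "\<And>x. x \<in> H \<Longrightarrow> (F has_field_derivative f x) (at x)"
    and "0 \<le> T" and segment: "\<And>t. t \<in> {0..T} \<Longrightarrow> a + of_real t * d \<in> H"
  shows "((\<lambda>t. f (a + of_real t * d) * d) has_integral (F (a + of_real T * d) - F a)) {0..T}"
proof -
  have "((\<lambda>t. F (a + of_real t * d)) has_vector_derivative f (a + of_real t * d) * d)
          (at t within {0..T})" if "t \<in> {0..T}" for t
  proof -
    have "((\<lambda>z. a + z * d) has_field_derivative d) (at (of_real t))"
      using DERIV_add[OF DERIV_const DERIV_cmult_right[OF DERIV_ident], of a d] by simp
    then have "((\<lambda>t. a + of_real t * d) has_vector_derivative d) (at t)"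
      by (rule has_vector_derivative_real_field)
    from field_vector_diff_chain_at[OF this F[OF segment[OF that]]]
    have "((\<lambda>t. F (a + of_real t * d)) has_vector_derivative f (a + of_real t * d) * d) (at t)"
      by (simp only: o_def mult.commute)
    then show ?thesis by (rule has_vector_derivative_at_within)
  qed
  from fundamental_theorem_of_calculus[OF \<open>0 \<le> T\<close> this]
  show ?thesis by (simp only: of_real_0 mult_zero_left add_0_right)
qed

lemma dominated_integral_atLeast_0:
  fixes h :: "real \<Rightarrow> complex"
  assumes cont: "continuous_on {0..} h" and G: "G integrable_on {0..}"
    and le: "\<And>r. r \<ge> 0 \<Longrightarrow> norm (h r) \<le> G r"
  shows "h integrable_on {0..}" and "(\<lambda>n. integral {0..real n} h) \<longlonglongrightarrow> integral {0..} h"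
proof -
  define h_n where "h_n = (\<lambda>(n::nat) r. if r \<in> {0..real n} then h r else 0)"
  have "h integrable_on {0..real n}" for n
    by (rule integrable_continuous_interval) (rule continuous_on_subset[OF cont], auto)
  then have h_n: "(h_n n has_integral integral {0..real n} h) {0..}" for n
    unfolding h_n_def by (subst has_integral_restrict) auto
  have bound: "norm (h_n n r) \<le> G r" if "r \<in> {0..}" for n r
    using le[of r] order_trans[OF norm_ge_zero le[of r]] that by (auto simp: h_n_def)
  have conv: "(\<lambda>n. h_n n r) \<longlonglongrightarrow> h r" if "r \<in> {0..}" for r
  proof (rule tendsto_eventually)
    obtain N where "r \<le> real N" using real_arch_simple by blast
    then show "eventually (\<lambda>n. h_n n r = h r) sequentially"
      by (intro eventually_sequentiallyI[of N]) (use that in \<open>auto simp: h_n_def\<close>)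
  qed
  have "h_n n integrable_on {0..}" for n using h_n by blast
  note lim = dominated_convergence[OF this G bound conv]
  show "h integrable_on {0..}" by (rule lim(1))
  have "(\<lambda>n. integral {0..} (h_n n)) = (\<lambda>n. integral {0..real n} h)"
    using h_n integral_unique by blast
  with lim(2) show "(\<lambda>n. integral {0..real n} h) \<longlonglongrightarrow> integral {0..} h" by simp
qed

lemma ray_integrand_dominated:
  fixes g :: "complex \<Rightarrow> complex"
  assumes ray: "\<And>r. r \<ge> 0 \<Longrightarrow> a + of_real r * w \<in> S" and bound: "\<And>y. y \<in> S \<Longrightarrow> norm (g y) \<le> B"
    and decay: "Re (p * w) < 0"
  obtains G where "G integrable_on {0..}"
    "\<And>r. r \<ge> 0 \<Longrightarrow> norm (exp (p * (a + of_real r * w)) * g (a + of_real r * w) * w) \<le> G r"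
proof
  let ?C = "B * exp (Re (p * a)) * norm w"
  have "((\<lambda>r. exp (- (- Re (p * w)) * r)) has_integral exp (- (- Re (p * w)) * 0) / - Re (p * w)) {0..}"
    using decay by (intro has_integral_exp_minus_to_infinity) simp
  from has_integral_mult_right[OF this, of ?C]
  show "(\<lambda>r. ?C * exp (Re (p * w) * r)) integrable_on {0..}" by auto
next
  fix r :: real assume "r \<ge> 0"
  have "Re (p * (a + of_real r * w)) = Re (p * a) + Re (p * w) * r" by (simp add: algebra_simps)
  then have "norm (exp (p * (a + of_real r * w)) * g (a + of_real r * w) * w)
      = exp (Re (p * a)) * exp (Re (p * w) * r) * norm (g (a + of_real r * w)) * norm w"
    by (simp add: norm_mult exp_add)
  also have "\<dots> \<le> exp (Re (p * a)) * exp (Re (p * w) * r) * B * norm w"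
    using bound[OF ray[OF \<open>r \<ge> 0\<close>]] by (intro mult_right_mono mult_left_mono) auto
  finally show "norm (exp (p * (a + of_real r * w)) * g (a + of_real r * w) * w)
      \<le> B * exp (Re (p * a)) * norm w * exp (Re (p * w) * r)" by (simp only: mult_ac)
qed

lemma continuous_on_ray_integrand:
  fixes g :: "complex \<Rightarrow> complex"
  assumes "continuous_on S g" and "\<And>r. r \<ge> 0 \<Longrightarrow> a + of_real r * w \<in> S"
  shows "continuous_on {0..} (\<lambda>r. exp (p * (a + of_real r * w)) * g (a + of_real r * w) * w)"
proof -
  have line: "continuous_on {0..} (\<lambda>r::real. a + of_real r * w)" by (intro continuous_intros)
  show ?thesis
    by (intro continuous_on_mult continuous_on_const continuous_on_exp
        continuous_on_compose2[OF assms(1) line] line) (use assms(2) in auto)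
qed

lemma integrable_ray_integrand:
  fixes g :: "complex \<Rightarrow> complex"
  assumes "continuous_on S g" and "\<And>r. r \<ge> 0 \<Longrightarrow> a + of_real r * w \<in> S"
    and "\<And>y. y \<in> S \<Longrightarrow> norm (g y) \<le> B" and "Re (p * w) < 0"
  shows "(\<lambda>r. exp (p * (a + of_real r * w)) * g (a + of_real r * w) * w) integrable_on {0..}"
proof -
  obtain G where "G integrable_on {0..}"
    "\<And>r. r \<ge> 0 \<Longrightarrow> norm (exp (p * (a + of_real r * w)) * g (a + of_real r * w) * w) \<le> G r"
    by (rule ray_integrand_dominated[where S = S and g = g and B = B]) (use assms in auto)
  from dominated_integral_atLeast_0(1)[OF continuous_on_ray_integrand[OF assms(1,2)] this]
  show ?thesis .
qed

lemma ray_integral_primitive_limit: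
  fixes g F :: "complex \<Rightarrow> complex"
  assumes hol: "g holomorphic_on H"
    and F: "\<And>x. x \<in> H \<Longrightarrow> (F has_field_derivative exp (p * x) * g x) (at x)"
    and ray: "\<And>r. r \<ge> 0 \<Longrightarrow> a + of_real r * w \<in> H"
    and bound: "\<And>y. y \<in> H \<Longrightarrow> norm (g y) \<le> B" and decay: "Re (p * w) < 0"
  shows "(\<lambda>n. F (a + of_real (real n) * w) - F a) \<longlonglongrightarrow> ray_integral p g a w"
proof -
  obtain G where "G integrable_on {0..}"
    "\<And>r. r \<ge> 0 \<Longrightarrow> norm (exp (p * (a + of_real r * w)) * g (a + of_real r * w) * w) \<le> G r"
    by (rule ray_integrand_dominated[where S = H and g = g and B = B]) (use ray bound decay in auto)
  from dominated_integral_atLeast_0(2)[OF continuous_on_ray_integrand[OF _ ray] this]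
  have "(\<lambda>n. integral {0..real n} (\<lambda>r. exp (p * (a + of_real r * w)) * g (a + of_real r * w) * w))
      \<longlonglongrightarrow> ray_integral p g a w"
    using holomorphic_on_imp_continuous_on[OF hol] by (simp add: ray_integral_def)
  moreover have "integral {0..real n} (\<lambda>r. exp (p * (a + of_real r * w)) * g (a + of_real r * w) * w)
      = F (a + of_real (real n) * w) - F a" for n
    by (rule integral_unique, rule has_integral_primitive_on_segment[OF F]) (use ray in auto)
  ultimately show ?thesis by simp
qed

lemma Re_mult_closed_segment_le:
  fixes p x y z :: complex
  assumes "z \<in> closed_segment x y"
  shows "Re (p * z) \<le> max (Re (p * x)) (Re (p * y))"
proof -
  obtain u where u: "0 \<le> u" "u \<le> 1" "z = (1 - u) *\<^sub>R x + u *\<^sub>R y"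
    using assms unfolding closed_segment_def by blast
  have "Re (p * z) = (1 - u) * Re (p * x) + u * Re (p * y)"
    unfolding u(3) by (simp add: scaleR_conv_of_real algebra_simps)
  also have "\<dots> \<le> (1 - u) * max (Re (p * x)) (Re (p * y)) + u * max (Re (p * x)) (Re (p * y))"
    by (intro add_mono mult_left_mono) (use u in auto)
  finally show ?thesis by (simp add: algebra_simps)
qed

lemma norm_primitive_diff_le:
  fixes g F :: "complex \<Rightarrow> complex"
  assumes "convex H" and F: "\<And>x. x \<in> H \<Longrightarrow> (F has_field_derivative exp (p * x) * g x) (at x)"
    and "x \<in> H" "y \<in> H" and bound: "\<And>z. z \<in> H \<Longrightarrow> norm (g z) \<le> B"
  shows "norm (F x - F y) \<le> B * exp (max (Re (p * x)) (Re (p * y))) * norm (x - y)"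
proof (rule field_differentiable_bound[OF convex_closed_segment])
  have segment: "closed_segment x y \<subseteq> H" by (rule closed_segment_subset[OF assms(3,4,1)])
  fix z assume z: "z \<in> closed_segment x y"
  then show "(F has_field_derivative exp (p * z) * g z) (at z within closed_segment x y)"
    using F segment by (blast intro: has_field_derivative_at_within)
  have "exp (Re (p * z)) * norm (g z) \<le> exp (max (Re (p * x)) (Re (p * y))) * B"
    using Re_mult_closed_segment_le[OF z] bound z segment by (intro mult_mono) auto
  then show "norm (exp (p * z) * g z) \<le> B * exp (max (Re (p * x)) (Re (p * y)))"
    by (simp add: norm_mult mult.commute)
qed auto

lemma primitive_between_rays_tendsto_0:
  fixes g F :: "complex \<Rightarrow> complex"
  assumes "convex H" and F: "\<And>x. x \<in> H \<Longrightarrow> (F has_field_derivative exp (p * x) * g x) (at x)"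
    and ray1: "\<And>r. r \<ge> 0 \<Longrightarrow> a + of_real r * w \<in> H"
    and ray2: "\<And>r. r \<ge> 0 \<Longrightarrow> b + of_real r * w' \<in> H"
    and bound: "\<And>y. y \<in> H \<Longrightarrow> norm (g y) \<le> B"
    and decay: "Re (p * w) < 0" "Re (p * w') < 0"
  shows "(\<lambda>n. F (a + of_real (real n) * w) - F (b + of_real (real n) * w')) \<longlonglongrightarrow> 0"
proof -
  define K where "K = max (Re (p * a)) (Re (p * b))"
  define \<mu> where "\<mu> = min (- Re (p * w)) (- Re (p * w'))"
  have "\<mu> > 0" using decay by (simp add: \<mu>_def)
  have "a \<in> H" using ray1[of 0] by simp
  from order_trans[OF norm_ge_zero bound[OF this]] have "B \<ge> 0" .
  have bound_n: "norm (F (a + of_real (real n) * w) - F (b + of_real (real n) * w'))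
      \<le> B * exp (K - \<mu> * real n) * (norm (a - b) + real n * norm (w - w'))" for n
  proof -
    let ?x = "a + of_real (real n) * w" and ?y = "b + of_real (real n) * w'"
    have exponent: "max (Re (p * ?x)) (Re (p * ?y)) \<le> K - \<mu> * real n"
    proof -
      have "Re (p * ?x) = Re (p * a) + Re (p * w) * real n" "Re (p * ?y) = Re (p * b) + Re (p * w') * real n"
        by (simp_all add: algebra_simps)
      moreover have "Re (p * w) * real n \<le> - \<mu> * real n" "Re (p * w') * real n \<le> - \<mu> * real n"
        by (intro mult_right_mono; simp add: \<mu>_def)+
      ultimately show ?thesis unfolding K_def by linarith
    qed
    have distance: "norm (?x - ?y) \<le> norm (a - b) + real n * norm (w - w')"
    proof -
      have "norm (?x - ?y) = norm ((a - b) + of_real (real n) * (w - w'))"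
        by (rule arg_cong[where f = norm]) (simp add: algebra_simps)
      also have "\<dots> \<le> norm (a - b) + norm (of_real (real n) * (w - w'))"
        by (rule norm_triangle_ineq)
      finally show ?thesis by (simp add: norm_mult)
    qed
    have "norm (F ?x - F ?y) \<le> B * exp (max (Re (p * ?x)) (Re (p * ?y))) * norm (?x - ?y)"
      using norm_primitive_diff_le[OF \<open>convex H\<close> F ray1[of "real n"] ray2[of "real n"] bound] by simp
    also have "\<dots> \<le> B * exp (K - \<mu> * real n) * (norm (a - b) + real n * norm (w - w'))"
      using exponent distance \<open>B \<ge> 0\<close> by (intro mult_mono mult_left_mono) auto
    finally show ?thesis .
  qed
  have "((\<lambda>x::real. B * exp (K - \<mu> * x) * (norm (a - b) + x * norm (w - w'))) \<longlongrightarrow> 0) at_top"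
    using \<open>\<mu> > 0\<close> by real_asymp
  from filterlim_compose[OF this filterlim_real_sequentially]
  have "(\<lambda>n. B * exp (K - \<mu> * real n) * (norm (a - b) + real n * norm (w - w'))) \<longlonglongrightarrow> 0"
    by (simp add: o_def)
  then show ?thesis
    by (rule Lim_null_comparison[OF always_eventually, rotated]) (use bound_n in blast)
qed

lemma ray_integral_diff_eq_segment_integral:
  fixes g :: "complex \<Rightarrow> complex"
  assumes "open H" "convex H" and hol: "g holomorphic_on H"
    and ray1: "\<And>r. r \<ge> 0 \<Longrightarrow> a + of_real r * w \<in> H"
    and ray2: "\<And>r. r \<ge> 0 \<Longrightarrow> b + of_real r * w' \<in> H"
    and bound: "\<And>y. y \<in> H \<Longrightarrow> norm (g y) \<le> B"
    and decay: "Re (p * w) < 0" "Re (p * w') < 0"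
  shows "ray_integral p g a w - ray_integral p g b w' =
     integral {0..1} (\<lambda>t. exp (p * (a + of_real t * (b - a))) * g (a + of_real t * (b - a)) * (b - a))"
proof -
  have "(\<lambda>y. exp (p * y) * g y) holomorphic_on H" by (intro holomorphic_intros hol)
  then obtain F where "\<And>x. x \<in> H \<Longrightarrow> (F has_field_derivative exp (p * x) * g x) (at x within H)"
    using holomorphic_convex_primitive'[OF \<open>convex H\<close> \<open>open H\<close>] by blast
  then have F: "\<And>x. x \<in> H \<Longrightarrow> (F has_field_derivative exp (p * x) * g x) (at x)"
    using at_within_open[OF _ \<open>open H\<close>] by metis
  have "(\<lambda>n. (F (a + of_real (real n) * w) - F a) - (F (b + of_real (real n) * w') - F b))
     \<longlonglongrightarrow> ray_integral p g a w - ray_integral p g b w'"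
    using ray_integral_primitive_limit[OF hol F] ray1 ray2 bound decay by (intro tendsto_diff) auto
  moreover have "(\<lambda>n. (F (a + of_real (real n) * w) - F a) - (F (b + of_real (real n) * w') - F b))
     \<longlonglongrightarrow> 0 + (F b - F a)"
    using tendsto_add[OF primitive_between_rays_tendsto_0[OF \<open>convex H\<close> F ray1 ray2 bound decay]
        tendsto_const[of "F b - F a"]]
    by (simp add: algebra_simps)
  ultimately have "ray_integral p g a w - ray_integral p g b w' = F b - F a"
    using LIMSEQ_unique by fastforce
  moreover have
    "integral {0..1} (\<lambda>t. exp (p * (a + of_real t * (b - a))) * g (a + of_real t * (b - a)) * (b - a))
      = F b - F a"
  proof -
    have "a + of_real t * (b - a) \<in> H" if "t \<in> {0..1}" for t
      using convexD[OF \<open>convex H\<close> ray1[of 0] ray2[of 0], of "1 - t" t] that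
      by (simp add: scaleR_conv_of_real algebra_simps)
    from has_integral_primitive_on_segment[where T = 1 and a = a and d = "b - a", OF F _ this]
    have "((\<lambda>t. exp (p * (a + of_real t * (b - a))) * g (a + of_real t * (b - a)) * (b - a))
      has_integral (F b - F a)) {0..1}" by simp
    then show ?thesis by (rule integral_unique)
  qed
  ultimately show ?thesis by (simp only:)
qed


section \<open>The inverse Laplace transform as a pair of ray integrals\<close>

lemma has_integral_reflect_real_general:
  fixes f :: "real \<Rightarrow> 'a::banach"
  assumes "(f has_integral i) S"
  shows "((\<lambda>x. f (-x)) has_integral i) (uminus ` S)"
proof -
  define f_S where "f_S = (\<lambda>x. if x \<in> S then f x else 0)"
  have restrict: "(\<lambda>x. if x \<in> uminus ` S then f (-x) else 0) = (\<lambda>x. f_S (-x))"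
    by (rule ext) (auto simp: f_S_def image_iff intro: bexI[of _ "- _"])
  have int: "\<And>a b. f_S integrable_on cbox a b"
    and lim: "\<And>e. e > 0 \<Longrightarrow> \<exists>B>0. \<forall>a b. ball 0 B \<subseteq> cbox a b \<longrightarrow> norm (integral (cbox a b) f_S - i) < e"
    using assms unfolding has_integral_alt'[of f] f_S_def by auto
  show ?thesis
    unfolding has_integral_alt'[of "\<lambda>x. f (-x)"] restrict
  proof (intro conjI allI impI)
    fix a b :: real
    show "(\<lambda>x. f_S (-x)) integrable_on cbox a b"
      using int[of "-b" "-a"]
        Henstock_Kurzweil_Integration.integrable_reflect_real[where f = f_S and a = "-b" and b = "-a"]
      by simp
  next
    fix e :: real assume "e > 0"
    then obtain B where "B > 0" and B: "\<And>a b. ball 0 B \<subseteq> cbox a b \<Longrightarrow> norm (integral (cbox a b) f_S - i) < e"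
      using lim by blast
    have "norm (integral (cbox a b) (\<lambda>x. f_S (-x)) - i) < e" if "ball 0 B \<subseteq> cbox a b" for a b
    proof -
      have "ball 0 B \<subseteq> cbox (-b) (-a)"
      proof
        fix x :: real assume "x \<in> ball 0 B"
        then have "-x \<in> ball 0 B" by (simp add: dist_real_def)
        then have "-x \<in> cbox a b" using that by blast
        then show "x \<in> cbox (-b) (-a)" by auto
      qed
      then show ?thesis
        using B Henstock_Kurzweil_Integration.integral_reflect_real[where f = f_S and a = "-b" and b = "-a"]
        by simp
    qed
    with \<open>B > 0\<close> show "\<exists>B>0. \<forall>a b. ball 0 B \<subseteq> cbox a b \<longrightarrow> norm (integral (cbox a b) (\<lambda>x. f_S (-x)) - i) < e"
      by blast
  qed
qed

lemma ILT_eq_ray_integrals: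
  fixes g :: "complex \<Rightarrow> complex" and \<phi>' c :: real
  defines "w \<equiv> \<i> * cis \<phi>'" and "u \<equiv> \<i> * cis (pi - \<phi>')"
  assumes "(\<lambda>r. exp (p * (of_real c + of_real r * w)) * g (of_real c + of_real r * w) * w) integrable_on {0..}"
    and "(\<lambda>r. exp (p * (of_real c + of_real r * u)) * g (of_real c + of_real r * u) * u) integrable_on {0..}"
  shows "ILT \<phi>' c g p =
    (1 / (2 * of_real pi * \<i>)) * (ray_integral p g (of_real c) w - ray_integral p g (of_real c) u)"
proof -
  define h where "h = (\<lambda>r. exp (p * ilt_path \<phi>' c r) * g (ilt_path \<phi>' c r) * ilt_path_deriv \<phi>' r)"
  define k where "k = (\<lambda>v r. exp (p * (of_real c + of_real r * v)) * g (of_real c + of_real r * v) * v)"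
  have "cis (pi - \<phi>') = - cis (- \<phi>')" by (simp add: complex_eq_iff)
  then have cis_exp: "\<i> * exp (\<i> * of_real \<phi>') = w" "- \<i> * exp (\<i> * of_real (- \<phi>')) = u"
    by (simp_all add: w_def u_def cis_conv_exp)
  have upper: "(h has_integral ray_integral p g (of_real c) w) {0..}"
  proof (rule has_integral_spike[OF negligible_sing])
    show "h r = k w r" if "r \<in> {0..} - {0}" for r
      using that cis_exp by (auto simp: h_def k_def ilt_path_def ilt_path_deriv_def mult_ac)
    show "(k w has_integral ray_integral p g (of_real c) w) {0..}"
      unfolding k_def ray_integral_def using assms(3) by (rule integrable_integral)
  qed
  have "((\<lambda>r. - k u r) has_integral - ray_integral p g (of_real c) u) {0..}"
    unfolding k_def ray_integral_def using assms(4) by (intro has_integral_neg integrable_integral)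
  from has_integral_reflect_real_general[OF this]
  have "((\<lambda>r. - k u (-r)) has_integral - ray_integral p g (of_real c) u) {..0}"
    by (simp add: image_uminus_atLeast)
  then have lower: "(h has_integral - ray_integral p g (of_real c) u) {..0}"
  proof (rule has_integral_spike[OF negligible_sing, rotated])
    show "h r = - k u (-r)" if "r \<in> {..0} - {0}" for r
      using that cis_exp by (auto simp: h_def k_def ilt_path_def ilt_path_deriv_def mult_ac)
  qed
  have "(h has_integral (ray_integral p g (of_real c) w + - ray_integral p g (of_real c) u)) ({0..} \<union> {..0})"
    by (rule has_integral_Un[OF upper lower]) (auto intro: negligible_subset[OF negligible_sing[of 0]])
  moreover have "{0..} \<union> {..0} = (UNIV :: real set)" by auto
  ultimately show ?thesis by (simp add: ILT_def h_def integral_unique)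
qed

section \<open>Upper bounds for the Gamma function\<close>

lemma ln_one_plus_ge:
  fixes x :: real assumes x: "x \<ge> 0"
  shows "2 * x / (2 + x) \<le> ln (1 + x)"
proof -
  define f where "f = (\<lambda>x::real. ln (1 + x) - 2 * x / (2 + x))"
  have "f 0 \<le> f x"
  proof (rule DERIV_nonneg_imp_nondecreasing[OF x])
    fix y :: real assume y: "0 \<le> y" "y \<le> x"
    have d: "(f has_real_derivative (1 / (1 + y) - 4 / (2 + y)^2)) (at y)"
      unfolding f_def using y
      by (auto intro!: derivative_eq_intros simp: power2_eq_square field_simps)
    have p1: "(2 + y)^2 > 0" "1 + y > 0" using y by auto
    have "4 * (1 + y) \<le> 1 * (2 + y)^2" using y by (simp add: power2_eq_square algebra_simps)
    then have "4 * (1 + y) / ((2 + y)^2 * (1 + y)) \<le> (2 + y)^2 * 1 / ((2 + y)^2 * (1 + y))"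
      using p1 by (intro divide_right_mono) auto
    moreover have "4 * (1 + y) / ((2 + y)^2 * (1 + y)) = 4 / (2 + y)^2" 
      by (rule nonzero_mult_divide_mult_cancel_right) (use p1 in auto)
    moreover have "(2 + y)^2 * 1 / ((2 + y)^2 * (1 + y)) = 1 / (1 + y)"
      by (rule nonzero_mult_divide_mult_cancel_left) (use p1 in auto)
    ultimately have "4 / (2 + y)^2 \<le> 1 / (1 + y)" by simp
    then show "\<exists>d. (f has_real_derivative d) (at y) \<and> 0 \<le> d" using d by auto
  qed
  then show ?thesis by (simp add: f_def)
qed

lemma ln_fact_le:
  assumes "n \<ge> 1"
  shows "ln (fact n :: real) \<le> 1 + (real n + 1/2) * ln (real n) - real n"
  using assms
proof (induction n rule: dec_induct)
  case base
  then show ?case by simp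
next
  case (step n)
  have n: "real n \<ge> 1" using step by simp
  have key: "1 \<le> (real n + 1/2) * (ln (real n + 1) - ln (real n))"
  proof -
    have "2 * (1 / real n) / (2 + 1 / real n) \<le> ln (1 + 1 / real n)"
      by (rule ln_one_plus_ge) (use n in simp)
    also have "ln (1 + 1 / real n) = ln (real n + 1) - ln (real n)"
    proof -
      have "1 + 1 / real n = (real n + 1) / real n" using n by (simp add: field_simps)
      then show ?thesis using n by (simp add: ln_div)
    qed
    finally have h: "2 * (1 / real n) / (2 + 1 / real n) \<le> ln (real n + 1) - ln (real n)" .
    have "2 * (1 / real n) / (2 + 1 / real n) = 1 / (real n + 1/2)"
      using n by (simp add: field_simps)
    with h have "1 / (real n + 1/2) \<le> ln (real n + 1) - ln (real n)" by simp
    then show ?thesis using n by (simp add: field_simps)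
  qed
  have "ln (fact (Suc n) :: real) = ln (real n + 1) + ln (fact n)"
    using n by (simp add: ln_mult add.commute)
  also have "\<dots> \<le> ln (real n + 1) + (1 + (real n + 1/2) * ln (real n) - real n)"
    using step.IH by simp
  also have "\<dots> \<le> 1 + (real (Suc n) + 1/2) * ln (real (Suc n)) - real (Suc n)"
    using key by (simp add: algebra_simps)
  finally show ?case .
qed

lemma ln_Gamma_real_le:
  fixes \<nu> :: real assumes nu: "\<nu> \<ge> 1"
  shows "ln (Gamma \<nu>) \<le> 2 + (\<nu> - 1/2) * ln \<nu> - \<nu>"
proof -
  define n where "n = nat \<lfloor>\<nu>\<rfloor>"
  define t where "t = \<nu> - real n"
  have n1: "n \<ge> 1" using nu by (simp add: n_def le_nat_iff)
  have nle: "real n \<le> \<nu>" using nu by (simp add: n_def)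
  have t0: "0 \<le> t" using nle by (simp add: t_def)
  have t1: "t \<le> 1" using nu by (simp add: t_def n_def) linarith
  have rn: "real n \<ge> 1" using n1 by simp
  have conv: "(ln \<circ> Gamma) ((1 - t) *\<^sub>R real n + t *\<^sub>R (real n + 1))
      \<le> (1 - t) * (ln \<circ> Gamma) (real n) + t * (ln \<circ> Gamma) (real n + 1)"
    by (rule convex_onD[OF log_convex_Gamma_real t0 t1]) (use rn in auto)
  have eqv: "(1 - t) *\<^sub>R real n + t *\<^sub>R (real n + 1) = \<nu>" by (simp add: t_def algebra_simps)
  have G1: "Gamma (real n) = fact (n - 1)"
    using Gamma_fact[of "n - 1", where 'a = real] n1 by (simp add: of_nat_diff)
  have G2: "Gamma (real n + 1) = fact n" using Gamma_fact[of n, where 'a = real] by (simp add: add.commute)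
  have fn: "(fact n :: real) = real n * fact (n - 1)"
    using n1 fact_reduce[of n, where 'a=real] by simp
  have lf: "ln (fact (n - 1) :: real) = ln (fact n) - ln (real n)"
    using fn rn by (simp add: ln_mult)
  have "ln (Gamma \<nu>) \<le> (1 - t) * ln (fact (n - 1)) + t * ln (fact n)"
    using conv unfolding eqv by (simp add: G1 G2)
  also have "\<dots> = ln (fact n) - (1 - t) * ln (real n)" unfolding lf by (simp add: algebra_simps)
  also have "\<dots> \<le> 1 + (real n + 1/2) * ln (real n) - real n - (1 - t) * ln (real n)"
    using ln_fact_le[OF n1] by simp
  also have "\<dots> = 1 + (\<nu> - 1/2) * ln (real n) - real n" by (simp add: t_def algebra_simps)
  also have "\<dots> \<le> 1 + (\<nu> - 1/2) * ln \<nu> - real n"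
  proof -
    have "ln (real n) \<le> ln \<nu>" using rn nle by simp
    then show ?thesis using nu by (simp add: mult_left_mono)
  qed
  also have "\<dots> \<le> 2 + (\<nu> - 1/2) * ln \<nu> - \<nu>" using t1 by (simp add: t_def)
  finally show ?thesis .
qed

lemma Gamma_real_le_inverse:
  fixes \<nu> :: real assumes "0 < \<nu>" "\<nu> \<le> 1"
  shows "Gamma \<nu> \<le> 1 / \<nu>"
proof -
  have conv: "(ln \<circ> Gamma) ((1 - \<nu>) *\<^sub>R 1 + \<nu> *\<^sub>R 2) \<le> (1 - \<nu>) * (ln \<circ> Gamma) 1 + \<nu> * (ln \<circ> Gamma) 2"
    by (rule convex_onD[OF log_convex_Gamma_real]) (use assms in auto)
  have "(1 - \<nu>) *\<^sub>R 1 + \<nu> *\<^sub>R 2 = \<nu> + 1" by (simp add: algebra_simps)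
  moreover have "Gamma (2::real) = 1" using Gamma_fact[of 1, where 'a=real] by simp
  ultimately have "ln (Gamma (\<nu> + 1)) \<le> 0" using conv by simp
  then have "Gamma (\<nu> + 1) \<le> 1" using Gamma_real_pos[of "\<nu> + 1"] assms by simp
  moreover have "Gamma (\<nu> + 1) = \<nu> * Gamma \<nu>"
    by (rule Gamma_plus1) (use assms in \<open>auto simp: nonpos_Ints_def\<close>)
  ultimately have "\<nu> * Gamma \<nu> \<le> 1" by simp
  then show ?thesis using assms by (simp add: field_simps)
qed

(* Both vertex-ray integrals together contribute at most A |p|^(nu-1) e^(2 rho0 |p|) times this. *)
definition estimate_factor :: "real \<Rightarrow> real \<Rightarrow> real \<Rightarrow> real" where
  "estimate_factor \<kappa> L \<nu> =
     (1/pi) * exp \<nu> * \<nu> powr (-\<nu>) * (\<nu> + L) * (exp 1 / sqrt (\<nu> * \<kappa>) + 1 / (\<nu> * \<kappa>))"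

definition estimate_const :: "real \<Rightarrow> real \<Rightarrow> real" where
  "estimate_const \<kappa> L = (exp 2 / pi) * (1 + L) * (exp 1 / sqrt \<kappa> + 1 / \<kappa>)"

lemma estimate_const_pos:
  assumes "\<kappa> > 0" and "L \<ge> 0"
  shows "estimate_const \<kappa> L > 0"
proof -
  have "1 + L > 0" and "exp 1 / sqrt \<kappa> + 1 / \<kappa> > 0" using assms by (auto intro: add_pos_pos)
  then show ?thesis by (simp add: estimate_const_def)
qed

lemma Gamma_mult_exp_powr_le:
  fixes \<nu> :: real
  assumes "\<nu> \<ge> 1"
  shows "Gamma \<nu> * exp \<nu> * \<nu> powr (-\<nu>) \<le> exp 2 / sqrt \<nu>"
proof -
  have "\<nu> > 0" using assms by simp
  have "Gamma \<nu> = exp (ln (Gamma \<nu>))" using Gamma_real_pos[OF \<open>\<nu> > 0\<close>] by simp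
  also have "\<dots> \<le> exp (2 + (\<nu> - 1/2) * ln \<nu> - \<nu>)" using ln_Gamma_real_le[OF assms] by simp
  finally have "Gamma \<nu> * (exp \<nu> * \<nu> powr (-\<nu>)) \<le> exp (2 + (\<nu> - 1/2) * ln \<nu> - \<nu>) * (exp \<nu> * \<nu> powr (-\<nu>))"
    by (rule mult_right_mono) simp
  also have "\<dots> = exp 2 / exp (ln \<nu> / 2)"
    using \<open>\<nu> > 0\<close> by (simp add: powr_def exp_add[symmetric] exp_diff[symmetric] algebra_simps)
  also have "exp (ln \<nu> / 2) = sqrt \<nu>"
    using \<open>\<nu> > 0\<close> by (simp add: powr_half_sqrt[symmetric] powr_def)
  finally show ?thesis by (simp only: mult.assoc)
qed

lemma Gamma_mult_estimate_factor_le_large: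
  fixes \<nu> \<kappa> L :: real
  assumes "\<kappa> > 0" and "L \<ge> 0" and "\<nu> \<ge> 1"
  shows "Gamma \<nu> * estimate_factor \<kappa> L \<nu> \<le> estimate_const \<kappa> L"
proof -
  define X where "X = exp 1 / sqrt (\<nu> * \<kappa>) + 1 / (\<nu> * \<kappa>)"
  have "\<nu> > 0" "sqrt \<nu> \<ge> 1" using assms by auto
  have "(\<nu> + L) / \<nu> \<le> 1 + L"
    using assms by (simp add: add_divide_distrib divide_le_eq mult_le_cancel_left1)
  moreover have "X * (\<nu> / sqrt \<nu>) \<le> exp 1 / sqrt \<kappa> + 1 / \<kappa>"
  proof -
    have "\<nu> / sqrt \<nu> = sqrt \<nu>" using \<open>\<nu> > 0\<close> by (simp add: real_div_sqrt)
    moreover have "X * sqrt \<nu> = exp 1 / sqrt \<kappa> + 1 / (\<kappa> * sqrt \<nu>)"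
      using \<open>\<nu> > 0\<close> assms(1) by (simp add: X_def real_sqrt_mult field_simps)
    moreover have "1 / (\<kappa> * sqrt \<nu>) \<le> 1 / \<kappa>"
      using \<open>sqrt \<nu> \<ge> 1\<close> assms(1) by (simp add: divide_le_eq_1 frac_le)
    ultimately show ?thesis by simp
  qed
  ultimately have "(exp 2 / pi) * ((\<nu> + L) / \<nu>) * (X * (\<nu> / sqrt \<nu>)) \<le> estimate_const \<kappa> L"
    unfolding estimate_const_def using assms \<open>\<nu> > 0\<close>
    by (intro mult_mono mult_left_mono) (auto simp: X_def)
  moreover have "Gamma \<nu> * estimate_factor \<kappa> L \<nu>
      = (1/pi) * (Gamma \<nu> * exp \<nu> * \<nu> powr (-\<nu>)) * (\<nu> + L) * X"
    by (simp add: estimate_factor_def X_def mult_ac)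
  moreover have "\<dots> \<le> (1/pi) * (exp 2 / sqrt \<nu>) * (\<nu> + L) * X"
    using Gamma_mult_exp_powr_le[OF assms(3)] assms \<open>\<nu> > 0\<close>
    by (intro mult_right_mono mult_left_mono) (auto simp: X_def)
  moreover have "(1/pi) * (exp 2 / sqrt \<nu>) * (\<nu> + L) * X = (exp 2 / pi) * ((\<nu> + L) / \<nu>) * (X * (\<nu> / sqrt \<nu>))"
    using \<open>\<nu> > 0\<close> by (simp add: field_simps)
  ultimately show ?thesis by linarith
qed

lemma Gamma_mult_estimate_factor_le_small:
  fixes \<nu> \<kappa> L :: real
  assumes k: "\<kappa> > 0" and L: "L \<ge> 0" and nu0: "\<nu> > 0" and nu1: "\<nu> \<le> 1"
  shows "Gamma \<nu> * estimate_factor \<kappa> L \<nu> \<le> estimate_const \<kappa> L / \<nu>^3"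
proof -
  define X where "X = exp 1 / sqrt (\<nu> * \<kappa>) + 1 / (\<nu> * \<kappa>)"
  have "\<nu> powr (-\<nu>) \<le> 1 / \<nu>"
  proof -
    have "\<nu> powr (-\<nu>) = exp (- \<nu> * ln \<nu>)" using nu0 by (simp add: powr_def)
    also have "\<dots> \<le> exp (- ln \<nu>)" using nu0 nu1 by (simp add: mult_le_cancel_right1)
    also have "\<dots> = 1 / \<nu>" using nu0 by (simp add: exp_minus inverse_eq_divide)
    finally show ?thesis .
  qed
  moreover have "X \<le> (exp 1 / sqrt \<kappa> + 1 / \<kappa>) / \<nu>"
  proof -
    have "\<nu> \<le> sqrt \<nu>" using nu0 nu1 by (simp add: real_le_rsqrt power2_eq_square mult_le_cancel_left1)
    then have "exp 1 / (sqrt \<nu> * sqrt \<kappa>) \<le> exp 1 / (\<nu> * sqrt \<kappa>)"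
      using nu0 k by (intro divide_left_mono mult_right_mono mult_pos_pos) auto
    then have "X \<le> exp 1 / (\<nu> * sqrt \<kappa>) + 1 / (\<nu> * \<kappa>)"
      unfolding X_def real_sqrt_mult by linarith
    also have "\<dots> = (exp 1 / sqrt \<kappa> + 1 / \<kappa>) / \<nu>"
      using nu0 k by (simp add: field_simps)
    finally show ?thesis .
  qed
  ultimately have "Gamma \<nu> * estimate_factor \<kappa> L \<nu>
      \<le> (1/pi) * ((1 / \<nu>) * exp 1 * (1 / \<nu>) * (1 + L) * ((exp 1 / sqrt \<kappa> + 1 / \<kappa>) / \<nu>))"
    using Gamma_real_le_inverse[OF nu0 nu1] nu0 nu1 L k Gamma_real_pos[OF nu0]
    unfolding estimate_factor_def X_def[symmetric]
    by (simp only: mult.assoc[symmetric] mult.commute[of "Gamma \<nu>"])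
       (intro mult_left_mono mult_mono; simp add: X_def)
  also have "\<dots> = (exp 1 / pi) * (1 + L) * (exp 1 / sqrt \<kappa> + 1 / \<kappa>) / \<nu>^3"
    by (simp add: field_simps power3_eq_cube)
  also have "\<dots> \<le> estimate_const \<kappa> L / \<nu>^3"
    unfolding estimate_const_def using L k nu0
    by (intro divide_right_mono mult_right_mono) auto
  finally show ?thesis .
qed

lemma Gamma_mult_estimate_factor_le:
  fixes \<nu> \<kappa> L :: real
  assumes "\<kappa> > 0" and "L \<ge> 0" and "\<nu> > 0"
  shows "Gamma \<nu> * estimate_factor \<kappa> L \<nu> \<le> estimate_const \<kappa> L * (1 + 1 / \<nu>^3)"
proof (cases "\<nu> \<le> 1")
  case True
  have "estimate_const \<kappa> L / \<nu>^3 \<le> estimate_const \<kappa> L * (1 + 1 / \<nu>^3)"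
    using estimate_const_pos[OF assms(1,2)] by (simp add: algebra_simps)
  with Gamma_mult_estimate_factor_le_small[OF assms True] show ?thesis by linarith
next
  case False
  have "estimate_const \<kappa> L \<le> estimate_const \<kappa> L * (1 + 1 / \<nu>^3)"
    using estimate_const_pos[OF assms(1,2)] assms(3) by (simp add: algebra_simps)
  moreover have "Gamma \<nu> * estimate_factor \<kappa> L \<nu> \<le> estimate_const \<kappa> L"
    using False by (intro Gamma_mult_estimate_factor_le_large[OF assms(1,2)]) simp
  ultimately show ?thesis by linarith
qed

section \<open>Rays and half-planes\<close>

lemma Re_cis_ray_mult_cis:
  "Re ((of_real a * cis \<gamma> + of_real r * (\<i> * cis \<alpha>)) * cis \<beta>) = a * cos (\<gamma> + \<beta>) - r * sin (\<alpha> + \<beta>)"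
  by (simp add: cos_add sin_add algebra_simps)

lemma norm_cis_ray:
  "cmod (of_real a * cis \<gamma> + of_real r * (\<i> * cis \<alpha>)) = sqrt (a^2 - 2 * a * r * sin (\<alpha> - \<gamma>) + r^2)"
proof -
  have "(cmod (of_real a * cis \<gamma> + of_real r * (\<i> * cis \<alpha>)))^2 =
     (a * cos \<gamma> - r * sin \<alpha>)^2 + (a * sin \<gamma> + r * cos \<alpha>)^2"
    by (simp add: cmod_power2)
  also have "\<dots> = a^2 * (sin \<gamma>^2 + cos \<gamma>^2) + r^2 * (sin \<alpha>^2 + cos \<alpha>^2)
      - 2 * a * r * (sin \<alpha> * cos \<gamma> - cos \<alpha> * sin \<gamma>)"
    by algebra
  also have "\<dots> = a^2 - 2 * a * r * sin (\<alpha> - \<gamma>) + r^2" by (simp add: sin_diff)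
  finally show ?thesis by (metis norm_ge_zero real_sqrt_unique)
qed

lemma Re_mult_i_cis_neg:
  assumes "P > 0" and "0 < \<theta> + \<alpha>" and "\<theta> + \<alpha> < pi"
  shows "Re (of_real P * cis \<theta> * (\<i> * cis \<alpha>)) < 0"
proof -
  have "Re (of_real P * cis \<theta> * (\<i> * cis \<alpha>)) = - P * sin (\<theta> + \<alpha>)"
    by (simp add: sin_add algebra_simps)
  with sin_gt_zero[OF assms(2,3)] \<open>P > 0\<close> show ?thesis by simp
qed

lemma Re_mult_vertex_ray:
  "Re (of_real P * cis \<theta> * (of_real R * cis (- \<theta>) + of_real r * (\<i> * cis \<alpha>)))
    = P * (R - r * sin (\<theta> + \<alpha>))"
proof -
  have "of_real P * cis \<theta> * (of_real R * cis (- \<theta>) + of_real r * (\<i> * cis \<alpha>))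
      = of_real P * ((of_real R * cis (- \<theta>) + of_real r * (\<i> * cis \<alpha>)) * cis \<theta>)"
    by (simp add: mult_ac)
  moreover have "Re (of_real P * z) = P * Re z" for z by simp
  ultimately have "Re (of_real P * cis \<theta> * (of_real R * cis (- \<theta>) + of_real r * (\<i> * cis \<alpha>)))
      = P * Re ((of_real R * cis (- \<theta>) + of_real r * (\<i> * cis \<alpha>)) * cis \<theta>)"
    by (simp only:)
  then show ?thesis unfolding Re_cis_ray_mult_cis by (simp add: add.commute)
qed

lemma norm_vertex_ray:
  "cmod (of_real R * cis (- \<theta>) + of_real r * (\<i> * cis \<alpha>)) = sqrt (R^2 - 2 * R * r * sin (\<theta> + \<alpha>) + r^2)"
  unfolding norm_cis_ray by (simp add: add.commute)

definition half_plane :: "real \<Rightarrow> real \<Rightarrow> complex set" where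
  "half_plane \<rho> \<beta> = {y. \<rho> < Re (y * cis \<beta>)}"

lemma half_plane_eq_halfspace: "half_plane \<rho> \<beta> = {y. \<rho> < inner (cnj (cis \<beta>)) y}"
  by (auto simp: half_plane_def inner_complex_def algebra_simps)

lemma open_half_plane: "open (half_plane \<rho> \<beta>)"
  unfolding half_plane_eq_halfspace by (rule open_halfspace_gt)

lemma convex_half_plane: "convex (half_plane \<rho> \<beta>)"
  unfolding half_plane_eq_halfspace by (rule convex_halfspace_gt)

lemma half_plane_subset_sector_dom:
  assumes "\<rho> > 0" and "\<bar>\<beta>\<bar> \<le> pi / 6"
  shows "half_plane \<rho> \<beta> \<subseteq> sector_dom \<rho>"
proof
  fix y assume "y \<in> half_plane \<rho> \<beta>"
  then have y: "\<rho> < Re (y * cis \<beta>)" by (simp add: half_plane_def)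
  also have "\<dots> \<le> cmod (y * cis \<beta>)" by (rule complex_Re_le_cmod)
  finally have "cmod y > \<rho>" by (simp add: norm_mult)
  have "Re (y * cis \<beta>) = cmod y * cos (Arg y + \<beta>)"
    by (subst rcis_cmod_Arg[symmetric, of y]) (simp add: rcis_def cos_add algebra_simps)
  with y \<open>\<rho> > 0\<close> have "0 < cmod y * cos (Arg y + \<beta>)" by linarith
  then have "cos (Arg y + \<beta>) > 0" using \<open>cmod y > \<rho>\<close> \<open>\<rho> > 0\<close> by (simp add: zero_less_mult_iff)
  have "\<not> (pi / 2 \<le> \<bar>Arg y + \<beta>\<bar> \<and> \<bar>Arg y + \<beta>\<bar> \<le> 3 * pi / 2)"
  proof
    assume "pi / 2 \<le> \<bar>Arg y + \<beta>\<bar> \<and> \<bar>Arg y + \<beta>\<bar> \<le> 3 * pi / 2"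
    then have "0 \<le> cos (\<bar>Arg y + \<beta>\<bar> - pi)" by (intro cos_ge_zero) auto
    with \<open>cos (Arg y + \<beta>) > 0\<close> show False by (simp add: cos_diff)
  qed
  moreover have "- pi < Arg y" "Arg y \<le> pi" using Arg_bounded[of y] by auto
  ultimately have "\<bar>Arg y\<bar> < 2 * pi / 3" using assms(2) by arith
  with \<open>cmod y > \<rho>\<close> show "y \<in> sector_dom \<rho>" by (simp add: sector_dom_def)
qed

lemma ray_in_half_plane:
  assumes "a * cos (\<gamma> + \<beta>) > \<rho>" and "sin (\<alpha> + \<beta>) \<le> 0" and "r \<ge> 0"
  shows "of_real a * cis \<gamma> + of_real r * (\<i> * cis \<alpha>) \<in> half_plane \<rho> \<beta>"
  using assms mult_nonneg_nonpos[of r "sin (\<alpha> + \<beta>)"]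
  unfolding half_plane_def mem_Collect_eq Re_cis_ray_mult_cis by linarith

section \<open>The integrand along a ray from the vertex\<close>

lemma exp_neg_square_le:
  fixes a u :: real
  assumes "a \<ge> 0" and "u \<ge> 0"
  shows "exp (- (a^2 * u^2)) \<le> exp 1 * exp (- (a * u))"
proof (cases "a * u \<le> 1")
  case True
  have "exp (- (a^2 * u^2)) \<le> exp 0" using assms by simp
  also have "\<dots> \<le> exp (1 - a * u)" using True by simp
  finally show ?thesis by (simp add: exp_diff exp_minus field_simps)
next
  case False
  then have "a * u \<le> (a * u) * (a * u)" using assms by (simp add: mult_le_cancel_left1)
  then have "exp (- (a^2 * u^2)) \<le> exp (- (a * u))" by (simp add: power2_eq_square mult_ac)
  also have "\<dots> \<le> exp 1 * exp (- (a * u))" by simp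
  finally show ?thesis .
qed

lemma exp_neg_min_le:
  fixes a u :: real
  assumes "a \<ge> 0" and "u \<ge> 0"
  shows "exp (- a * min (u^2) u) \<le> exp 1 * exp (- sqrt a * u) + exp (- a * u)"
proof (cases "u \<le> 1")
  case True
  then have "min (u^2) u = u^2" by (simp add: power2_eq_square mult_left_le_one_le assms(2))
  then have "exp (- a * min (u^2) u) = exp (- ((sqrt a)^2 * u^2))" using assms by simp
  also have "\<dots> \<le> exp 1 * exp (- (sqrt a * u))" by (rule exp_neg_square_le) (use assms in auto)
  finally show ?thesis by (simp add: add_increasing2)
next
  case False
  then have "min (u^2) u = u" by (simp add: power2_eq_square)
  then show ?thesis by (simp add: add_increasing)
qed

(* On a ray from the vertex, |y|^2 = R^2 Q with u = r / R, and the integrand is bounded by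
   R^(-nu) exp (- nu (sigma u + ln Q / 2)). As ln Q >= 1 - 1/Q, this bounds that exponent from below. *)
lemma ray_exponent_ge:
  fixes \<sigma> \<kappa> u :: real
  defines "Q \<equiv> 1 - 2 * \<sigma> * u + u^2"
  assumes "0 < \<sigma>" "\<sigma> < 1/2" "\<kappa> > 0" "\<kappa> \<le> (1 - 4 * \<sigma>^2) / 4" "\<kappa> \<le> \<sigma> / 2" "u \<ge> 0"
  shows "Q > 0" and "\<kappa> * min (u^2) u \<le> \<sigma> * u + (1 - 1 / Q) / 2"
proof -
  have "\<sigma>^2 < 1" using assms(2,3) by (simp add: power2_eq_square mult_strict_mono[of \<sigma> 1 \<sigma> 1, simplified])
  moreover have "Q = (u - \<sigma>)^2 + (1 - \<sigma>^2)" by (simp add: Q_def power2_eq_square algebra_simps)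
  ultimately show "Q > 0" by (smt (verit) zero_le_power2)
  have E: "(\<sigma> * u + (1 - 1 / Q) / 2) * (2 * Q) = u^2 * (1 - 4 * \<sigma>^2 + 2 * \<sigma> * u)"
    using \<open>Q > 0\<close> by (simp add: Q_def field_simps power2_eq_square)
  have "1 - 4 * \<sigma>^2 \<ge> 0" using assms by simp
  have "\<kappa> * min (u^2) u * (2 * Q) \<le> u^2 * (1 - 4 * \<sigma>^2 + 2 * \<sigma> * u)"
  proof (cases "u \<le> 1")
    case True
    then have "min (u^2) u = u^2" by (simp add: power2_eq_square mult_left_le_one_le assms(7))
    have "Q \<le> 2" unfolding Q_def using True assms(2,7)
      by (smt (verit) mult_nonneg_nonneg mult_left_le_one_le power2_eq_square)
    then have "\<kappa> * (2 * Q) \<le> \<kappa> * 4" using assms(4) by simp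
    also have "\<dots> \<le> 1 - 4 * \<sigma>^2 + 2 * \<sigma> * u"
    proof -
      have "0 \<le> 2 * \<sigma> * u" using assms(2,7) by simp
      then show ?thesis using assms(5) by (simp add: field_simps)
    qed
    finally have "\<kappa> * (2 * Q) \<le> 1 - 4 * \<sigma>^2 + 2 * \<sigma> * u" .
    from mult_left_mono[OF this, of "u^2"] \<open>min (u^2) u = u^2\<close> show ?thesis
      by (simp add: mult_ac)
  next
    case False
    then have "min (u^2) u = u" by (simp add: power2_eq_square)
    have "Q \<le> 2 * u^2" unfolding Q_def using False assms(2)
      by (smt (verit) mult_nonneg_nonneg one_le_power power2_eq_square)
    then have "\<kappa> * u * (2 * Q) \<le> \<kappa> * u * (4 * u^2)"
      using False assms(4) by (intro mult_left_mono) auto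
    also have "\<dots> \<le> (\<sigma> / 2) * u * (4 * u^2)" using False assms(6) by (intro mult_right_mono) auto
    also have "\<dots> = u^2 * (2 * \<sigma> * u)" by (simp add: power2_eq_square)
    also have "\<dots> \<le> u^2 * (1 - 4 * \<sigma>^2 + 2 * \<sigma> * u)"
      using \<open>1 - 4 * \<sigma>^2 \<ge> 0\<close> by (intro mult_left_mono) auto
    finally show ?thesis using \<open>min (u^2) u = u\<close> by simp
  qed
  then have "\<kappa> * min (u^2) u * (2 * Q) \<le> (\<sigma> * u + (1 - 1 / Q) / 2) * (2 * Q)"
    unfolding E .
  then show "\<kappa> * min (u^2) u \<le> \<sigma> * u + (1 - 1 / Q) / 2"
    by (rule mult_right_le_imp_le) (use \<open>Q > 0\<close> in simp)
qed

lemma ray_weight_le: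
  fixes P R \<nu> \<sigma> \<kappa> r :: real
  assumes "P > 0" and "R > 0" and "\<nu> > 0" and "P * R \<ge> \<nu>"
    and \<sigma>: "0 < \<sigma>" "\<sigma> < 1/2" and \<kappa>: "\<kappa> > 0" "\<kappa> \<le> (1 - 4 * \<sigma>^2) / 4" "\<kappa> \<le> \<sigma> / 2"
    and "r \<ge> 0"
  shows "exp (- P * \<sigma> * r) * sqrt (R^2 - 2 * R * r * \<sigma> + r^2) powr (-\<nu>)
    \<le> R powr (-\<nu>) * (exp 1 * exp (- (sqrt (\<nu> * \<kappa>) / R) * r) + exp (- (\<nu> * \<kappa> / R) * r))"
proof -
  define u where "u = r / R"
  define Q where "Q = 1 - 2 * \<sigma> * u + u^2"
  have "u \<ge> 0" and r: "r = R * u" using assms by (auto simp: u_def)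
  note exponent = ray_exponent_ge[OF \<sigma> \<kappa> \<open>u \<ge> 0\<close>, folded Q_def]
  have "R^2 - 2 * R * r * \<sigma> + r^2 = R^2 * Q" unfolding Q_def r by (simp add: power2_eq_square algebra_simps)
  then have "exp (- P * \<sigma> * r) * sqrt (R^2 - 2 * R * r * \<sigma> + r^2) powr (-\<nu>)
      = R powr (-\<nu>) * (exp (- P * \<sigma> * r) * exp (- (\<nu> / 2) * ln Q))"
    using \<open>R > 0\<close> exponent(1)
    by (simp add: real_sqrt_mult powr_def ln_mult ln_sqrt exp_add[symmetric] algebra_simps)
  also have "\<dots> \<le> R powr (-\<nu>) * (exp (- \<nu> * \<sigma> * u) * exp (- (\<nu> / 2) * ln Q))"
    using mult_right_mono[OF \<open>P * R \<ge> \<nu>\<close>, of "\<sigma> * u"] \<sigma> \<open>u \<ge> 0\<close>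
    by (intro mult_left_mono mult_right_mono) (auto simp: r mult_ac)
  also have "\<dots> \<le> R powr (-\<nu>) * exp (- \<nu> * (\<kappa> * min (u^2) u))"
  proof (intro mult_left_mono)
    have "ln (1 / Q) \<le> 1 / Q - 1" using exponent(1) by (intro ln_le_minus_one) simp
    then have "(1 - 1 / Q) / 2 \<le> ln Q / 2" using exponent(1) by (simp add: ln_div)
    with exponent(2) have "\<kappa> * min (u^2) u \<le> \<sigma> * u + ln Q / 2"
      by (rule order_trans[OF _ add_left_mono])
    then have "\<nu> * (\<kappa> * min (u^2) u) \<le> \<nu> * (\<sigma> * u + ln Q / 2)"
      using \<open>\<nu> > 0\<close> by (intro mult_left_mono) auto
    moreover have "exp (- \<nu> * \<sigma> * u) * exp (- (\<nu> / 2) * ln Q) = exp (- (\<nu> * (\<sigma> * u + ln Q / 2)))"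
      by (simp add: exp_add[symmetric] algebra_simps)
    ultimately show "exp (- \<nu> * \<sigma> * u) * exp (- (\<nu> / 2) * ln Q) \<le> exp (- \<nu> * (\<kappa> * min (u^2) u))"
      by simp
  qed simp
  also have "\<dots> \<le> R powr (-\<nu>) * (exp 1 * exp (- (sqrt (\<nu> * \<kappa>) / R) * r) + exp (- (\<nu> * \<kappa> / R) * r))"
    using exp_neg_min_le[of "\<nu> * \<kappa>" u] \<open>\<nu> > 0\<close> \<kappa> \<open>u \<ge> 0\<close> \<open>R > 0\<close>
    by (intro mult_left_mono) (auto simp: u_def mult_ac)
  finally show ?thesis .
qed

lemma norm_vertex_ray_integrand_le:
  fixes g :: "complex \<Rightarrow> complex" and P R \<theta> \<alpha> \<nu> \<sigma> \<kappa> A r :: real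
  defines "p \<equiv> of_real P * cis \<theta>" and "y \<equiv> of_real R * cis (- \<theta>) + of_real r * (\<i> * cis \<alpha>)"
  assumes "cmod (g y) \<le> A * cmod y powr (-\<nu>)" and "A \<ge> 0" and "sin (\<theta> + \<alpha>) = \<sigma>"
    and PR: "P > 0" "R > 0" "\<nu> > 0" "P * R \<ge> \<nu>"
    and \<sigma>\<kappa>: "0 < \<sigma>" "\<sigma> < 1/2" "\<kappa> > 0" "\<kappa> \<le> (1 - 4 * \<sigma>^2) / 4" "\<kappa> \<le> \<sigma> / 2" and "r \<ge> 0"
  shows "cmod (exp (p * y) * g y * (\<i> * cis \<alpha>))
    \<le> A * exp (P * R) * R powr (-\<nu>) * (exp 1 * exp (- (sqrt (\<nu> * \<kappa>) / R) * r) + exp (- (\<nu> * \<kappa> / R) * r))"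
proof -
  have "Re (p * y) = P * (R - r * \<sigma>)"
    unfolding p_def y_def Re_mult_vertex_ray \<open>sin (\<theta> + \<alpha>) = \<sigma>\<close> ..
  then have "cmod (exp (p * y) * g y * (\<i> * cis \<alpha>)) = exp (P * (R - r * \<sigma>)) * cmod (g y)"
    by (simp add: norm_mult)
  also have "\<dots> \<le> exp (P * (R - r * \<sigma>)) * (A * sqrt (R^2 - 2 * R * r * \<sigma> + r^2) powr (-\<nu>))"
    using assms(3) \<open>sin (\<theta> + \<alpha>) = \<sigma>\<close> by (simp add: y_def norm_vertex_ray)
  also have "\<dots> = A * exp (P * R) * (exp (- P * \<sigma> * r) * sqrt (R^2 - 2 * R * r * \<sigma> + r^2) powr (-\<nu>))"
    by (simp add: exp_add[symmetric] algebra_simps)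
  also have "\<dots> \<le> A * exp (P * R) * (R powr (-\<nu>)
      * (exp 1 * exp (- (sqrt (\<nu> * \<kappa>) / R) * r) + exp (- (\<nu> * \<kappa> / R) * r)))"
    using ray_weight_le[OF PR \<sigma>\<kappa> \<open>r \<ge> 0\<close>] \<open>A \<ge> 0\<close> by (intro mult_left_mono) auto
  finally show ?thesis by (simp only: mult_ac)
qed

lemma norm_vertex_ray_integral_le:
  fixes g :: "complex \<Rightarrow> complex" and P R \<theta> \<alpha> \<nu> \<sigma> \<kappa> A :: real
  defines "p \<equiv> of_real P * cis \<theta>" and "v \<equiv> of_real R * cis (- \<theta>)" and "w \<equiv> \<i> * cis \<alpha>"
  assumes cont: "continuous_on S g" and ray: "\<And>r. r \<ge> 0 \<Longrightarrow> v + of_real r * w \<in> S"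
    and bound: "\<And>y. y \<in> S \<Longrightarrow> cmod (g y) \<le> A * cmod y powr (-\<nu>)" and "A \<ge> 0"
    and "sin (\<theta> + \<alpha>) = \<sigma>" and PR: "P > 0" "R > 0" "\<nu> > 0" "P * R \<ge> \<nu>"
    and \<sigma>\<kappa>: "0 < \<sigma>" "\<sigma> < 1/2" "\<kappa> > 0" "\<kappa> \<le> (1 - 4 * \<sigma>^2) / 4" "\<kappa> \<le> \<sigma> / 2"
  shows "cmod (ray_integral p g v w)
    \<le> A * exp (P * R) * R powr (-\<nu>) * (exp 1 * (R / sqrt (\<nu> * \<kappa>)) + R / (\<nu> * \<kappa>))"
proof -
  define a b where "a = sqrt (\<nu> * \<kappa>) / R" and "b = \<nu> * \<kappa> / R"
  define K where "K = A * exp (P * R) * R powr (-\<nu>)"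
  define m where "m = (\<lambda>r::real. K * (exp 1 * exp (- a * r) + exp (- b * r)))"
  have "a > 0" "b > 0" using PR \<sigma>\<kappa> by (simp_all add: a_def b_def)
  then have "((\<lambda>r. exp 1 * exp (- a * r) + exp (- b * r))
      has_integral exp 1 * (exp (- a * 0) / a) + exp (- b * 0) / b) {0..}"
    by (intro has_integral_add has_integral_mult_right has_integral_exp_minus_to_infinity)
  from has_integral_mult_right[OF this, of K]
  have m: "(m has_integral K * (exp 1 * (1 / a) + 1 / b)) {0..}" by (simp add: m_def)
  have dominated: "norm (exp (p * (v + of_real r * w)) * g (v + of_real r * w) * w) \<le> m r" if "r \<ge> 0" for r
  proof -
    have "norm (exp (p * (v + of_real r * w)) * g (v + of_real r * w) * w)
        \<le> K * (exp 1 * exp (- (sqrt (\<nu> * \<kappa>) / R) * r) + exp (- (\<nu> * \<kappa> / R) * r))"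
      unfolding p_def v_def w_def K_def
      by (rule norm_vertex_ray_integrand_le)
        (use bound ray \<open>A \<ge> 0\<close> \<open>sin (\<theta> + \<alpha>) = \<sigma>\<close> PR \<sigma>\<kappa> that in \<open>auto simp: v_def w_def\<close>)
    then show ?thesis by (simp add: m_def a_def b_def)
  qed
  have "m integrable_on {0..}" using m by blast
  note integrable =
    dominated_integral_atLeast_0(1)[OF continuous_on_ray_integrand[OF cont ray] this dominated]
  have "norm (ray_integral p g v w) \<le> integral {0..} m"
    unfolding ray_integral_def
    by (rule integral_norm_bound_integral[OF integrable \<open>m integrable_on {0..}\<close>]) (use dominated in auto)
  also have "\<dots> = A * exp (P * R) * R powr (-\<nu>) * (exp 1 * (R / sqrt (\<nu> * \<kappa>)) + R / (\<nu> * \<kappa>))"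
    using integral_unique[OF m] by (simp add: K_def a_def b_def)
  finally show ?thesis .
qed

lemma exp_mult_affine_le:
  fixes l x \<nu> :: real
  assumes "0 < l" "l < 2" and "x > 0" and "\<nu> \<ge> 0"
  shows "exp (l * x) * (\<nu> + l * x) \<le> exp (2 * x) * (\<nu> + l / (2 - l))"
proof -
  have "exp (l * x) * \<nu> \<le> exp (2 * x) * \<nu>" using assms by (intro mult_right_mono) auto
  moreover have "exp (l * x) * (l * x) \<le> exp (2 * x) * (l / (2 - l))"
  proof -
    have "l * x = l / (2 - l) * ((2 - l) * x)" using assms by (simp add: field_simps)
    also have "\<dots> \<le> l / (2 - l) * exp ((2 - l) * x)"
      using order_trans[OF _ exp_ge_add_one_self, of "(2 - l) * x"] assms by (intro mult_left_mono) auto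
    finally have "exp (l * x) * (l * x) \<le> exp (l * x) * (l / (2 - l) * exp ((2 - l) * x))"
      by (intro mult_left_mono) auto
    also have "\<dots> = exp (2 * x) * (l / (2 - l))"
      by (simp add: mult.left_commute exp_add[symmetric] algebra_simps)
    finally show ?thesis .
  qed
  ultimately show ?thesis by (simp add: distrib_left)
qed

lemma vertex_ray_bound_le:
  fixes P \<nu> \<rho>0 lm A \<kappa> L R :: real
  assumes P: "P > 0" and nu: "\<nu> > 0" and rho: "\<rho>0 > 0" and l0: "0 < lm" and l2: "lm < 2"
    and A: "A \<ge> 0" and k: "\<kappa> > 0" and L: "L = lm / (2 - lm)" and R: "R = \<nu> / P + lm * \<rho>0"
  shows "(1/pi) * (A * exp (P * R) * R powr (-\<nu>) * (exp 1 * (R / sqrt (\<nu> * \<kappa>)) + R / (\<nu> * \<kappa>)))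
     \<le> A * P powr (\<nu> - 1) * exp (2 * \<rho>0 * P) * estimate_factor \<kappa> L \<nu>"
proof -
  define Y where "Y = exp 1 / sqrt (\<nu> * \<kappa>) + 1 / (\<nu> * \<kappa>)"
  have Y0: "Y \<ge> 0" using nu k by (simp add: Y_def)
  have R0: "R > 0" using P nu rho l0 by (simp add: R add_pos_pos)
  have RY: "exp 1 * (R / sqrt (\<nu> * \<kappa>)) + R / (\<nu> * \<kappa>) = R * Y" by (simp add: Y_def algebra_simps)
  define x where "x = \<rho>0 * P"
  have x0: "x > 0" using rho P by (simp add: x_def)
  have PR: "P * R = \<nu> + lm * x" using P by (simp add: R x_def field_simps)
  have Rpow: "R powr (-\<nu>) \<le> (\<nu> / P) powr (-\<nu>)"
    by (rule powr_mono2') (use nu P rho l0 in \<open>auto simp: R\<close>)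
  have Rpow2: "(\<nu> / P) powr (-\<nu>) = \<nu> powr (-\<nu>) * P powr \<nu>"
    using nu P by (simp add: powr_minus_divide powr_divide field_simps)
  have key: "exp (lm * x) * (\<nu> + lm * x) \<le> exp (2 * x) * (\<nu> + L)"
    unfolding L using exp_mult_affine_le[OF l0 l2 x0] nu by simp
  have "(1/pi) * (A * exp (P * R) * R powr (-\<nu>) * (exp 1 * (R / sqrt (\<nu> * \<kappa>)) + R / (\<nu> * \<kappa>)))
      = (1/pi) * A * Y * (exp (P * R) * R * R powr (-\<nu>))" unfolding RY by (simp add: mult_ac)
  also have "\<dots> \<le> (1/pi) * A * Y * (exp (P * R) * R * (\<nu> powr (-\<nu>) * P powr \<nu>))"
    using Rpow Rpow2 A Y0 R0 by (intro mult_left_mono) auto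
  also have "exp (P * R) * R * (\<nu> powr (-\<nu>) * P powr \<nu>)
      = exp \<nu> * \<nu> powr (-\<nu>) * P powr (\<nu> - 1) * (exp (lm * x) * (\<nu> + lm * x))"
  proof -
    have e1: "exp (P * R) = exp \<nu> * exp (lm * x)" unfolding PR by (simp add: exp_add)
    have e2: "P powr \<nu> = P powr (\<nu> - 1) * P" using P by (simp add: powr_diff)
    have e3: "R * P = \<nu> + lm * x" using PR by (simp add: mult.commute)
    show ?thesis unfolding e1 e2 e3[symmetric] by (simp only: mult_ac)
  qed
  also have "(1/pi) * A * Y * (exp \<nu> * \<nu> powr (-\<nu>) * P powr (\<nu> - 1) * (exp (lm * x) * (\<nu> + lm * x)))
     \<le> (1/pi) * A * Y * (exp \<nu> * \<nu> powr (-\<nu>) * P powr (\<nu> - 1) * (exp (2 * x) * (\<nu> + L)))"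
    using key A Y0 by (intro mult_left_mono) auto
  also have "\<dots> = A * P powr (\<nu> - 1) * exp (2 * \<rho>0 * P) * estimate_factor \<kappa> L \<nu>"
    by (simp add: estimate_factor_def Y_def x_def mult_ac)
  finally show ?thesis .
qed

section \<open>Moving the contour\<close>

(* For p = |p| e^(i theta) the contour is moved onto the two rays from the vertex R e^(-i theta),
   R = nu / |p| + vertex_scale phi * rho0, in the directions i e^(i (tau - theta)) and
   i e^(i (pi - tau - theta)) with tau = ray_tilt phi. decay_rate phi is the constant kappa of
   ray_weight_le, and vertex_const phi is the constant L of estimate_factor. *)

definition ray_tilt :: "real \<Rightarrow> real" where
  "ray_tilt \<phi> = (pi/6 - \<phi>) / 2"

definition decay_rate :: "real \<Rightarrow> real" where
  "decay_rate \<phi> = min ((1 - 4 * sin (ray_tilt \<phi>)^2) / 4) (sin (ray_tilt \<phi>) / 2)"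

definition vertex_scale :: "real \<Rightarrow> real" where
  "vertex_scale \<phi> = (1 / cos (\<phi> + pi/6) + 2) / 2"

definition vertex_const :: "real \<Rightarrow> real" where
  "vertex_const \<phi> = vertex_scale \<phi> / (2 - vertex_scale \<phi>)"

lemma deformation_constants:
  assumes "0 < \<phi>" "\<phi> < pi/6"
  shows "0 < ray_tilt \<phi>" "ray_tilt \<phi> < pi/6" "0 < sin (ray_tilt \<phi>)" "sin (ray_tilt \<phi>) < 1/2"
    "decay_rate \<phi> > 0" "decay_rate \<phi> \<le> (1 - 4 * sin (ray_tilt \<phi>)^2) / 4"
    "decay_rate \<phi> \<le> sin (ray_tilt \<phi>) / 2" "cos (\<phi> + pi/6) > 0"
    "vertex_scale \<phi> * cos (\<phi> + pi/6) > 1" "0 < vertex_scale \<phi>" "vertex_scale \<phi> < 2"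
    "vertex_const \<phi> \<ge> 0"
proof -
  show p0: "0 < ray_tilt \<phi>" and p1: "ray_tilt \<phi> < pi/6" using assms by (simp_all add: ray_tilt_def)
  show s0: "0 < sin (ray_tilt \<phi>)" by (rule sin_gt_zero) (use p0 p1 in auto)
  have "sin (ray_tilt \<phi>) < sin (pi/6)" by (rule sin_monotone_2pi) (use p0 p1 in auto)
  then show s1: "sin (ray_tilt \<phi>) < 1/2" by (simp add: sin_30)
  have "(sin (ray_tilt \<phi>))^2 < (1/2)^2" using s0 s1 by (intro power_strict_mono) auto
  then show "decay_rate \<phi> > 0" using s0 by (simp add: decay_rate_def power2_eq_square)
  show "decay_rate \<phi> \<le> (1 - 4 * sin (ray_tilt \<phi>)^2) / 4" "decay_rate \<phi> \<le> sin (ray_tilt \<phi>) / 2"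
    unfolding decay_rate_def by (rule min.cobounded1, rule min.cobounded2)
  have "cos (pi/3) < cos (\<phi> + pi/6)" by (rule cos_monotone_0_pi) (use assms in auto)
  then have c: "cos (\<phi> + pi/6) > 1/2" by (simp add: cos_60)
  then show cp: "cos (\<phi> + pi/6) > 0" by simp
  have "vertex_scale \<phi> * cos (\<phi> + pi/6) = (1 + 2 * cos (\<phi> + pi/6)) / 2"
    using cp by (simp add: vertex_scale_def field_simps)
  then show "vertex_scale \<phi> * cos (\<phi> + pi/6) > 1" using c by simp
  have "1 / cos (\<phi> + pi/6) < 2" using c cp by (simp add: divide_less_eq)
  then show l2: "vertex_scale \<phi> < 2" by (simp add: vertex_scale_def)
  show l0: "vertex_scale \<phi> > 0" using cp by (simp add: vertex_scale_def add_pos_pos)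
  show "vertex_const \<phi> \<ge> 0" using l0 l2 by (simp add: vertex_const_def)
qed

lemma ILT_eq_vertex_rays:
  fixes g :: "complex \<Rightarrow> complex" and \<phi>' c \<rho>0 B :: real and p v w u :: complex
  defines "H\<^sub>u \<equiv> half_plane \<rho>0 (- (pi/6))" and "H\<^sub>l \<equiv> half_plane \<rho>0 (pi/6)"
  assumes "\<rho>0 > 0" and hol: "g holomorphic_on sector_dom \<rho>0"
    and bound: "\<And>y. y \<in> sector_dom \<rho>0 \<Longrightarrow> cmod (g y) \<le> B"
    and contour_rays: "\<And>r. r \<ge> 0 \<Longrightarrow> of_real c + of_real r * (\<i> * cis \<phi>') \<in> H\<^sub>u"
      "\<And>r. r \<ge> 0 \<Longrightarrow> of_real c + of_real r * (\<i> * cis (pi - \<phi>')) \<in> H\<^sub>l"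
    and vertex_rays: "\<And>r. r \<ge> 0 \<Longrightarrow> v + of_real r * w \<in> H\<^sub>u" "\<And>r. r \<ge> 0 \<Longrightarrow> v + of_real r * u \<in> H\<^sub>l"
    and decay: "Re (p * (\<i> * cis \<phi>')) < 0" "Re (p * (\<i> * cis (pi - \<phi>'))) < 0"
      "Re (p * w) < 0" "Re (p * u) < 0"
  shows "ILT \<phi>' c g p = (1 / (2 * of_real pi * \<i>)) * (ray_integral p g v w - ray_integral p g v u)"
proof -
  have sub: "H\<^sub>u \<subseteq> sector_dom \<rho>0" "H\<^sub>l \<subseteq> sector_dom \<rho>0"
    unfolding H\<^sub>u_def H\<^sub>l_def using half_plane_subset_sector_dom[OF \<open>\<rho>0 > 0\<close>] by simp_all
  have cont: "continuous_on (sector_dom \<rho>0) g" by (rule holomorphic_on_imp_continuous_on[OF hol])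
  have "ILT \<phi>' c g p = (1 / (2 * of_real pi * \<i>)) *
      (ray_integral p g (of_real c) (\<i> * cis \<phi>') - ray_integral p g (of_real c) (\<i> * cis (pi - \<phi>')))"
    using contour_rays sub decay(1,2)
    by (intro ILT_eq_ray_integrals integrable_ray_integrand[OF cont _ bound]) auto
  moreover have "ray_integral p g (of_real c) (\<i> * cis \<phi>') - ray_integral p g (of_real c) (\<i> * cis (pi - \<phi>'))
      = ray_integral p g v w - ray_integral p g v u"
  proof -
    have "ray_integral p g (of_real c) (\<i> * cis \<phi>') - ray_integral p g v w =
        integral {0..1} (\<lambda>t. exp (p * (of_real c + of_real t * (v - of_real c)))
          * g (of_real c + of_real t * (v - of_real c)) * (v - of_real c))"
      using sub bound unfolding H\<^sub>u_def
      by (intro ray_integral_diff_eq_segment_integral[OF open_half_plane convex_half_plane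
            holomorphic_on_subset[OF hol] contour_rays(1)[unfolded H\<^sub>u_def]
            vertex_rays(1)[unfolded H\<^sub>u_def] _ decay(1,3)]) auto
    also have "\<dots> = ray_integral p g (of_real c) (\<i> * cis (pi - \<phi>')) - ray_integral p g v u"
      using sub bound unfolding H\<^sub>l_def
      by (intro ray_integral_diff_eq_segment_integral[symmetric, OF open_half_plane convex_half_plane
            holomorphic_on_subset[OF hol] contour_rays(2)[unfolded H\<^sub>l_def]
            vertex_rays(2)[unfolded H\<^sub>l_def] _ decay(2,4)]) auto
    finally show ?thesis by algebra
  qed
  ultimately show ?thesis by (simp only:)
qed

lemma contour_rays_in_half_planes:
  assumes "\<rho>0 > 0" and "2 * \<rho>0 \<le> c" and "0 < \<phi>'" and "\<phi>' < pi/6" and "r \<ge> 0"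
  shows "of_real c + of_real r * (\<i> * cis \<phi>') \<in> half_plane \<rho>0 (- (pi/6))"
    and "of_real c + of_real r * (\<i> * cis (pi - \<phi>')) \<in> half_plane \<rho>0 (pi/6)"
proof -
  have "c * (sqrt 3 / 2) \<ge> 2 * \<rho>0 * (sqrt 3 / 2)" using assms(2) by (intro mult_right_mono) auto
  moreover have "2 * \<rho>0 * (sqrt 3 / 2) > \<rho>0" using \<open>\<rho>0 > 0\<close> by simp
  ultimately have "c * (sqrt 3 / 2) > \<rho>0" by linarith
  then have c: "c * cos (0 + - (pi/6)) > \<rho>0" "c * cos (0 + pi/6) > \<rho>0" by (simp_all add: cos_30)
  have "sin (\<phi>' + - (pi/6)) \<le> 0" using sin_less_zero[of "\<phi>' + - (pi/6)"] assms(3,4) by simp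
  from ray_in_half_plane[OF c(1) this \<open>r \<ge> 0\<close>]
  show "of_real c + of_real r * (\<i> * cis \<phi>') \<in> half_plane \<rho>0 (- (pi/6))" by simp
  have "sin ((pi - \<phi>') + pi/6) \<le> 0" by (rule sin_le_zero) (use assms(3,4) in auto)
  from ray_in_half_plane[OF c(2) this \<open>r \<ge> 0\<close>]
  show "of_real c + of_real r * (\<i> * cis (pi - \<phi>')) \<in> half_plane \<rho>0 (pi/6)" by simp
qed

lemma vertex_rays_in_half_planes:
  assumes "0 < \<phi>" "\<phi> < pi/6" and "\<bar>\<theta>\<bar> < \<phi>" and "R > 0" and "\<rho>0 < R * cos (\<phi> + pi/6)"
    and "r \<ge> 0"
  shows "of_real R * cis (- \<theta>) + of_real r * (\<i> * cis (ray_tilt \<phi> - \<theta>)) \<in> half_plane \<rho>0 (- (pi/6))"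
    and "of_real R * cis (- \<theta>) + of_real r * (\<i> * cis (pi - ray_tilt \<phi> - \<theta>)) \<in> half_plane \<rho>0 (pi/6)"
proof -
  have "cos (\<phi> + pi/6) \<le> cos (\<theta> + pi/6)" "cos (\<phi> + pi/6) \<le> cos (- \<theta> + pi/6)"
    by (rule cos_monotone_0_pi_le; use assms in auto)+
  then have "R * cos (\<phi> + pi/6) \<le> R * cos (\<theta> + pi/6)" "R * cos (\<phi> + pi/6) \<le> R * cos (- \<theta> + pi/6)"
    using \<open>R > 0\<close> by (simp_all add: mult_left_mono)
  moreover have "R * cos (- \<theta> + - (pi/6)) = R * cos (\<theta> + pi/6)" by (metis cos_minus minus_add_distrib)
  ultimately have "\<rho>0 < R * cos (- \<theta> + - (pi/6))" "\<rho>0 < R * cos (- \<theta> + pi/6)"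
    using assms(5) by linarith+
  moreover have "sin ((ray_tilt \<phi> - \<theta>) + - (pi/6)) \<le> 0"
    and "sin ((pi - ray_tilt \<phi> - \<theta>) + pi/6) \<le> 0"
  proof -
    have "\<theta> < \<phi>" "- \<theta> < \<phi>" using assms(3) by auto
    moreover have "ray_tilt \<phi> = (pi/6 - \<phi>) / 2" by (simp add: ray_tilt_def)
    ultimately have "- (pi/2) < (ray_tilt \<phi> - \<theta>) + - (pi/6) \<and> (ray_tilt \<phi> - \<theta>) + - (pi/6) < 0"
      and "pi \<le> (pi - ray_tilt \<phi> - \<theta>) + pi/6 \<and> (pi - ray_tilt \<phi> - \<theta>) + pi/6 \<le> 2 * pi"
      using assms(1,2) pi_gt_zero by argo+
    with sin_less_zero sin_le_zero
    show "sin ((ray_tilt \<phi> - \<theta>) + - (pi/6)) \<le> 0" and "sin ((pi - ray_tilt \<phi> - \<theta>) + pi/6) \<le> 0"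
      by fastforce+
  qed
  ultimately show "of_real R * cis (- \<theta>) + of_real r * (\<i> * cis (ray_tilt \<phi> - \<theta>)) \<in> half_plane \<rho>0 (- (pi/6))"
    and "of_real R * cis (- \<theta>) + of_real r * (\<i> * cis (pi - ray_tilt \<phi> - \<theta>)) \<in> half_plane \<rho>0 (pi/6)"
    using ray_in_half_plane \<open>r \<ge> 0\<close> by auto
qed

lemma vertex_radius_bounds:
  fixes \<phi> \<rho>0 \<nu> P :: real
  defines "R \<equiv> \<nu> / P + vertex_scale \<phi> * \<rho>0"
  assumes "0 < \<phi>" "\<phi> < pi/6" and "\<rho>0 > 0" and "\<nu> > 0" and "P > 0"
  shows "R > 0" and "\<nu> \<le> P * R" and "\<rho>0 < R * cos (\<phi> + pi/6)"
proof -
  note constants = deformation_constants[OF assms(2,3)]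
  show "R > 0" unfolding R_def using assms constants(10) by (intro add_pos_pos) auto
  have "P * R = \<nu> + P * (vertex_scale \<phi> * \<rho>0)" using \<open>P > 0\<close> by (simp add: R_def field_simps)
  then show "\<nu> \<le> P * R" using assms constants(10) by simp
  have "\<rho>0 < vertex_scale \<phi> * cos (\<phi> + pi/6) * \<rho>0" using constants(9) \<open>\<rho>0 > 0\<close> by simp
  also have "\<dots> \<le> R * cos (\<phi> + pi/6)" using constants(8) assms by (simp add: R_def algebra_simps)
  finally show "\<rho>0 < R * cos (\<phi> + pi/6)" .
qed

lemma ILT_eq_tilted_vertex_rays:
  fixes \<phi> \<rho>0 \<phi>' c B P \<theta> R :: real and g :: "complex \<Rightarrow> complex"
  defines "p \<equiv> of_real P * cis \<theta>" and "v \<equiv> of_real R * cis (- \<theta>)" and "\<tau> \<equiv> ray_tilt \<phi>"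
  assumes \<phi>: "0 < \<phi>" "\<phi> < pi/6" and "\<rho>0 > 0" and hol: "g holomorphic_on sector_dom \<rho>0"
    and bound: "\<And>y. y \<in> sector_dom \<rho>0 \<Longrightarrow> cmod (g y) \<le> B"
    and \<phi>': "\<phi> < \<phi>'" "\<phi>' < pi/6" and "2 * \<rho>0 \<le> c"
    and "P > 0" and "\<bar>\<theta>\<bar> < \<phi>" and "R > 0" and "\<rho>0 < R * cos (\<phi> + pi/6)"
  shows "ILT \<phi>' c g p = (1 / (2 * of_real pi * \<i>)) *
    (ray_integral p g v (\<i> * cis (\<tau> - \<theta>)) - ray_integral p g v (\<i> * cis (pi - \<tau> - \<theta>)))"
proof (rule ILT_eq_vertex_rays[OF \<open>\<rho>0 > 0\<close> hol bound])
  have "- \<phi> < \<theta>" "\<theta> < \<phi>" using \<open>\<bar>\<theta>\<bar> < \<phi>\<close> by auto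
  then have "0 < \<theta> + \<phi>' \<and> \<theta> + \<phi>' < pi" "0 < \<theta> + (pi - \<phi>') \<and> \<theta> + (pi - \<phi>') < pi"
    "0 < \<theta> + (\<tau> - \<theta>) \<and> \<theta> + (\<tau> - \<theta>) < pi" "0 < \<theta> + (pi - \<tau> - \<theta>) \<and> \<theta> + (pi - \<tau> - \<theta>) < pi"
    using \<phi> \<phi>' deformation_constants(1,2)[OF \<phi>] pi_gt_zero unfolding \<tau>_def by argo+
  then show "Re (p * (\<i> * cis \<phi>')) < 0" "Re (p * (\<i> * cis (pi - \<phi>'))) < 0"
    "Re (p * (\<i> * cis (\<tau> - \<theta>))) < 0" "Re (p * (\<i> * cis (pi - \<tau> - \<theta>))) < 0"
    unfolding p_def using Re_mult_i_cis_neg[OF \<open>P > 0\<close>] by blast+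
qed (use contour_rays_in_half_planes[OF \<open>\<rho>0 > 0\<close> \<open>2 * \<rho>0 \<le> c\<close>, of \<phi>']
      vertex_rays_in_half_planes[OF \<phi> \<open>\<bar>\<theta>\<bar> < \<phi>\<close> \<open>R > 0\<close> \<open>\<rho>0 < R * cos (\<phi> + pi/6)\<close>]
      \<phi> \<phi>' in \<open>auto simp: v_def \<tau>_def\<close>)

lemma norm_ILT_le:
  fixes \<phi> \<rho>0 \<nu> A \<phi>' c :: real and g :: "complex \<Rightarrow> complex" and p :: complex
  assumes \<phi>: "0 < \<phi>" "\<phi> < pi/6" and "\<rho>0 > 0" and "\<nu> > 0"
    and hol: "g holomorphic_on sector_dom \<rho>0"
    and bound: "\<And>y. y \<in> sector_dom \<rho>0 \<Longrightarrow> cmod (g y) \<le> A * cmod y powr (-\<nu>)" and "A \<ge> 0"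
    and \<phi>': "\<phi> < \<phi>'" "\<phi>' < pi/6" and "2 * \<rho>0 \<le> c" and "p \<in> S_sector \<phi>"
  shows "cmod (ILT \<phi>' c g p)
    \<le> A * cmod p powr (\<nu> - 1) * exp (2 * \<rho>0 * cmod p) * estimate_factor (decay_rate \<phi>) (vertex_const \<phi>) \<nu>"
proof -
  note constants = deformation_constants[OF \<phi>]
  define P \<theta> \<tau> \<kappa> where "P = cmod p" and "\<theta> = Arg p" and "\<tau> = ray_tilt \<phi>" and "\<kappa> = decay_rate \<phi>"
  define R where "R = \<nu> / P + vertex_scale \<phi> * \<rho>0"
  define v where "v = of_real R * cis (- \<theta>)"
  define X where "X = A * exp (P * R) * R powr (-\<nu>) * (exp 1 * (R / sqrt (\<nu> * \<kappa>)) + R / (\<nu> * \<kappa>))"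
  have "P > 0" "\<bar>\<theta>\<bar> < \<phi>" using \<open>p \<in> S_sector \<phi>\<close> by (auto simp: S_sector_def P_def \<theta>_def)
  have p: "p = of_real P * cis \<theta>" using rcis_cmod_Arg[of p] by (simp add: rcis_def P_def \<theta>_def)
  note R = vertex_radius_bounds[OF \<phi> \<open>\<rho>0 > 0\<close> \<open>\<nu> > 0\<close> \<open>P > 0\<close>, folded R_def]
  have "cmod (g y) \<le> A * \<rho>0 powr (-\<nu>)" if "y \<in> sector_dom \<rho>0" for y
  proof -
    have "cmod y powr (-\<nu>) \<le> \<rho>0 powr (-\<nu>)"
      using that \<open>\<rho>0 > 0\<close> \<open>\<nu> > 0\<close> by (intro powr_mono2') (auto simp: sector_dom_def)
    with bound[OF that] \<open>A \<ge> 0\<close> show ?thesis by (meson mult_left_mono order_trans)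
  qed
  from ILT_eq_tilted_vertex_rays[OF \<phi> \<open>\<rho>0 > 0\<close> hol this \<phi>' \<open>2 * \<rho>0 \<le> c\<close> \<open>P > 0\<close> \<open>\<bar>\<theta>\<bar> < \<phi>\<close> R(1,3)]
  have ILT: "ILT \<phi>' c g p = (1 / (2 * of_real pi * \<i>)) *
      (ray_integral p g v (\<i> * cis (\<tau> - \<theta>)) - ray_integral p g v (\<i> * cis (pi - \<tau> - \<theta>)))"
    by (simp add: p v_def \<tau>_def)
  have "cmod (ray_integral p g v (\<i> * cis \<alpha>)) \<le> X"
    if "\<alpha> = \<tau> - \<theta> \<or> \<alpha> = pi - \<tau> - \<theta>" for \<alpha>
  proof -
    have "v + of_real r * (\<i> * cis \<alpha>) \<in> sector_dom \<rho>0" if "r \<ge> 0" for r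
      using vertex_rays_in_half_planes[OF \<phi> \<open>\<bar>\<theta>\<bar> < \<phi>\<close> R(1,3) that] \<open>\<alpha> = \<tau> - \<theta> \<or> \<alpha> = pi - \<tau> - \<theta>\<close>
        half_plane_subset_sector_dom[OF \<open>\<rho>0 > 0\<close>, of "pi/6"]
        half_plane_subset_sector_dom[OF \<open>\<rho>0 > 0\<close>, of "- (pi/6)"]
      by (auto simp: v_def \<tau>_def)
    moreover have "sin (\<theta> + \<alpha>) = sin \<tau>" using that by auto
    ultimately show ?thesis
      unfolding X_def p v_def \<kappa>_def
      using holomorphic_on_imp_continuous_on[OF hol] bound \<open>A \<ge> 0\<close> \<open>P > 0\<close> R(1,2) \<open>\<nu> > 0\<close> constants(3-7)
      by (intro norm_vertex_ray_integral_le[where \<sigma> = "sin \<tau>" and S = "sector_dom \<rho>0"]) (auto simp: \<tau>_def)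
  qed
  then have "cmod (ray_integral p g v (\<i> * cis (\<tau> - \<theta>)) - ray_integral p g v (\<i> * cis (pi - \<tau> - \<theta>))) \<le> 2 * X"
    by (smt (verit) norm_triangle_ineq4)
  from divide_right_mono[OF this, of "2 * pi"]
  have "cmod (ILT \<phi>' c g p) \<le> (1/pi) * X"
    unfolding ILT by (simp add: norm_mult norm_divide)
  also have "\<dots> \<le> A * P powr (\<nu> - 1) * exp (2 * \<rho>0 * P) * estimate_factor \<kappa> (vertex_const \<phi>) \<nu>"
    unfolding X_def using \<open>P > 0\<close> \<open>\<nu> > 0\<close> \<open>\<rho>0 > 0\<close> constants(5,10,11) \<open>A \<ge> 0\<close>
    by (intro vertex_ray_bound_le) (simp_all add: vertex_const_def R_def \<kappa>_def)
  finally show ?thesis by (simp add: P_def \<kappa>_def)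
qed

lemma norm_le_of_norm_powr_mult_less:
  fixes y z :: complex
  assumes "y \<noteq> 0" and "cmod (y powr of_real \<nu> * z) < A"
  shows "cmod z \<le> A * cmod y powr (-\<nu>)"
proof -
  have "cmod y powr \<nu> * cmod z < A"
    using assms(2) by (simp add: norm_mult norm_powr_real_powr')
  then show ?thesis using assms(1) by (simp add: powr_minus_divide field_simps)
qed

(* The factor 2 only serves to make the inequality strict. *)
lemma norm_ILT_less:
  fixes \<phi> \<rho>0 \<alpha> \<nu> A \<phi>' c :: real and g :: "complex \<Rightarrow> complex" and p :: complex
  defines "M \<equiv> estimate_const (decay_rate \<phi>) (vertex_const \<phi>)"
  assumes \<phi>: "0 < \<phi>" "\<phi> < pi/6" and "\<rho>0 > 0" and "0 < \<alpha>" "\<alpha> \<le> \<nu>"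
    and an: "g analytic_on sector_dom \<rho>0"
    and gb: "\<forall>y\<in>sector_dom \<rho>0. cmod (y powr of_real \<nu> * g y) < A"
    and \<phi>': "\<phi> < \<phi>'" "\<phi>' < pi/6" and "2 * \<rho>0 \<le> c" and "p \<in> S_sector \<phi>"
  shows "cmod (ILT \<phi>' c g p)
    < 2 * (M * (1 + 1 / \<alpha>^3)) / Gamma \<nu> * A * cmod p powr (\<nu> - 1) * exp (2 * \<rho>0 * cmod p)"
proof -
  note constants = deformation_constants[OF \<phi>]
  define K where "K = M * (1 + 1 / \<alpha>^3)"
  define Z where "Z = A * cmod p powr (\<nu> - 1) * exp (2 * \<rho>0 * cmod p)"
  have "\<nu> > 0" "Gamma \<nu> > 0" using \<open>0 < \<alpha>\<close> \<open>\<alpha> \<le> \<nu>\<close> by auto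
  have "M > 0" using estimate_const_pos[OF constants(5,12)] by (simp add: M_def)
  then have "K > 0" using \<open>0 < \<alpha>\<close> by (simp add: K_def add_pos_pos)
  have "Arg (of_real (\<rho>0 + 1)) = 0" using \<open>\<rho>0 > 0\<close> by (subst Arg_of_real) auto
  then have "of_real (\<rho>0 + 1) \<in> sector_dom \<rho>0"
    using \<open>\<rho>0 > 0\<close> by (simp add: sector_dom_def del: of_real_add)
  then have "A > 0" using gb by (meson norm_ge_zero le_less_trans)
  then have "Z > 0" using \<open>p \<in> S_sector \<phi>\<close> by (simp add: Z_def S_sector_def)
  have bound: "cmod (g y) \<le> A * cmod y powr (-\<nu>)" if "y \<in> sector_dom \<rho>0" for y
    using that gb \<open>\<rho>0 > 0\<close> by (intro norm_le_of_norm_powr_mult_less) (auto simp: sector_dom_def)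
  have "M * (1 + 1 / \<nu>^3) \<le> K"
    using \<open>M > 0\<close> \<open>0 < \<alpha>\<close> \<open>\<alpha> \<le> \<nu>\<close> by (auto simp: K_def intro!: mult_left_mono divide_left_mono power_mono)
  then have "Gamma \<nu> * estimate_factor (decay_rate \<phi>) (vertex_const \<phi>) \<nu> \<le> K"
    using Gamma_mult_estimate_factor_le[OF constants(5,12) \<open>\<nu> > 0\<close>] by (simp add: M_def)
  then have factor: "estimate_factor (decay_rate \<phi>) (vertex_const \<phi>) \<nu> \<le> K / Gamma \<nu>"
    using \<open>Gamma \<nu> > 0\<close> by (simp add: field_simps)
  have "cmod (ILT \<phi>' c g p) \<le> Z * estimate_factor (decay_rate \<phi>) (vertex_const \<phi>) \<nu>"
    using norm_ILT_le[OF \<phi> \<open>\<rho>0 > 0\<close> \<open>\<nu> > 0\<close> analytic_imp_holomorphic[OF an] bound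
        less_imp_le[OF \<open>A > 0\<close>] \<phi>' \<open>2 * \<rho>0 \<le> c\<close> \<open>p \<in> S_sector \<phi>\<close>]
    by (simp add: Z_def)
  also have "\<dots> \<le> Z * (K / Gamma \<nu>)" using factor \<open>Z > 0\<close> by (intro mult_left_mono) auto
  also have "\<dots> < Z * (2 * K / Gamma \<nu>)"
    using \<open>Z > 0\<close> \<open>K > 0\<close> \<open>Gamma \<nu> > 0\<close> by (intro mult_strict_left_mono divide_strict_right_mono) auto
  finally show ?thesis by (simp add: Z_def K_def mult_ac)
qed

theorem corollary4:
  fixes \<phi> :: real
  assumes "0 < \<phi>" and "\<phi> < pi / 6"
  shows "\<exists>(C1 :: real \<Rightarrow> real) (C2 :: real).
    \<forall>(\<rho>0 :: real) (T :: real) (A_r :: real) (A_b :: real) (\<alpha>_r :: real) (\<beta> :: real)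
      (\<alpha> :: nat \<Rightarrow> real) (r :: complex \<Rightarrow> real \<Rightarrow> complex)
      (b :: nat \<Rightarrow> nat \<Rightarrow> complex \<Rightarrow> real \<Rightarrow> complex).
      (\<rho>0 > 0 \<and> T > 0 \<and> \<alpha>_r \<ge> 1 \<and> \<beta> > 0 \<and> (\<forall>j\<le>3. \<alpha> j > 0) \<and>
       (\<forall>t\<in>{0..T}. (\<lambda>y. r y t) analytic_on sector_dom \<rho>0 \<and>
          (\<forall>y\<in>sector_dom \<rho>0. cmod (y powr of_real \<alpha>_r * r y t) < A_r)) \<and>
       (\<forall>j\<le>3. \<forall>k. \<forall>t\<in>{0..T}. (\<lambda>y. b j k y t) analytic_on sector_dom \<rho>0 \<and>
          (\<forall>y\<in>sector_dom \<rho>0. cmod (y powr of_real (\<alpha> j + real k * \<beta>) * b j k y t) < A_b)))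
      \<longrightarrow>
      (\<forall>\<phi>'. \<phi> < \<phi>' \<and> \<phi>' < pi / 6 \<longrightarrow>
        (\<exists>c0. \<forall>c\<ge>c0. \<forall>p\<in>S_sector \<phi>. \<forall>t\<in>{0..T}.
           (\<forall>j\<le>3. \<forall>k. cmod (ILT \<phi>' c (\<lambda>y. b j k y t) p)
               < C1 (\<alpha> j) / Gamma (\<alpha> j + real k * \<beta>) * A_b
                 * cmod p powr (real k * \<beta> + \<alpha> j - 1) * exp (2 * \<rho>0 * cmod p)) \<and>
           cmod (ILT \<phi>' c (\<lambda>y. r y t) p)
               < C2 / Gamma \<alpha>_r * A_r * cmod p powr (\<alpha>_r - 1) * exp (2 * \<rho>0 * cmod p)))"
proof -
  define M where "M = estimate_const (decay_rate \<phi>) (vertex_const \<phi>)"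
  show ?thesis
    apply (rule exI[of _ "\<lambda>\<alpha>. 2 * (M * (1 + 1 / \<alpha>^3))"], rule exI[of _ "2 * (M * (1 + 1 / 1^3))"])
    apply (intro allI impI)
    subgoal premises H for \<rho>0 T A_r A_b \<alpha>_r \<beta> \<alpha> r b \<phi>'
    proof (intro exI[of _ "2 * \<rho>0"] allI impI ballI conjI)
      fix c p t and j k :: nat
      assume "2 * \<rho>0 \<le> c" "p \<in> S_sector \<phi>" "t \<in> {0..T}" "j \<le> 3"
      with H have "cmod (ILT \<phi>' c (\<lambda>y. b j k y t) p) < 2 * (M * (1 + 1 / (\<alpha> j)^3))
          / Gamma (\<alpha> j + real k * \<beta>) * A_b * cmod p powr (\<alpha> j + real k * \<beta> - 1) * exp (2 * \<rho>0 * cmod p)"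
        unfolding M_def by (intro norm_ILT_less[OF assms]) auto
      then show "cmod (ILT \<phi>' c (\<lambda>y. b j k y t) p) < 2 * (M * (1 + 1 / (\<alpha> j)^3))
          / Gamma (\<alpha> j + real k * \<beta>) * A_b * cmod p powr (real k * \<beta> + \<alpha> j - 1) * exp (2 * \<rho>0 * cmod p)"
        by (simp add: add.commute)
    next
      fix c p t assume "2 * \<rho>0 \<le> c" "p \<in> S_sector \<phi>" "t \<in> {0..T}"
      with H show "cmod (ILT \<phi>' c (\<lambda>y. r y t) p)
          < 2 * (M * (1 + 1 / 1^3)) / Gamma \<alpha>_r * A_r * cmod p powr (\<alpha>_r - 1) * exp (2 * \<rho>0 * cmod p)"
        unfolding M_def by (intro norm_ILT_less[OF assms]) auto
    qed
    done
qed

end
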